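(* There exists a matrix $A=(a_{i,j})\in UT_n(K)$ such that (a) $\mathrm{coef}_{K,l}(a_{i,j})=0$ for all $1\le i<j\le n$ and all $l\in p\mathbb Z\cup\mathbb Z_{\ge0}$, and (b) the equation $X^{(p)}A=X$ defines $L/K$, i.e. it has a solution $\Theta=(\theta_{i,j})\in UT_n(L)$, and for such a solution $L=K(\theta_{i,j}:1\le i<j\le n)$.
   Context: Let $p$ be a prime and $K$ a complete discrete valuation field of characteristic $p$ with algebraically closed residue field $k$, normalized valuation $v_K$. Fix $t\in K$ with $v_K(t)=-1$; every $x\in K$ has a unique expansion $x=\sum_{l\ge v_K(x)}x_lt^{-l}$ with $x_l\in k$, and we set $\mathrm{coef}_{K,l}(x)=x_l$ (and $0$ for $l<v_K(x)$). For a field $F$, $UT_n(F)$ denotes the group of upper triangular $n\times n$ matrices over $F$ with all diagonal entries $1$; $X^{(p)}$ is the matrix obtained by raising every entry of $X$ to the $p$-th power. Let $n\ge2$ and let $L/K$ be a totally wildly ramified finite Galois extension with $\mathrm{Gal}(L/K)\cong UT_n(\mathbb F_p)$. *)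

theory Defs
  imports Main "HOL-Computational_Algebra.Primes" "HOL-Algebra.Group"
begin

text \<open>The field L is modelled as the whole type 'a (a field); K and the coefficient
  field k are subsets of it.\<close>

definition is_subfield :: "'a::field set \<Rightarrow> bool" where
  "is_subfield S \<longleftrightarrow> 0 \<in> S \<and> 1 \<in> S \<and>
     (\<forall>x\<in>S. \<forall>y\<in>S. x + y \<in> S \<and> x - y \<in> S \<and> x * y \<in> S) \<and>
     (\<forall>x\<in>S. x \<noteq> 0 \<longrightarrow> inverse x \<in> S)"

definition field_adjoin :: "'a::field set \<Rightarrow> 'a set \<Rightarrow> 'a set" where
  "field_adjoin F S = \<Inter> {E. is_subfield E \<and> F \<subseteq> E \<and> S \<subseteq> E}"

text \<open>Discrete valuation v on K (values on K - {0}; v(0) = infinity is handled by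
  treating equality separately).\<close>
definition normalized_discrete_valuation :: "'a::field set \<Rightarrow> ('a \<Rightarrow> int) \<Rightarrow> bool" where
  "normalized_discrete_valuation K v \<longleftrightarrow>
     (\<forall>x\<in>K. \<forall>y\<in>K. x \<noteq> 0 \<longrightarrow> y \<noteq> 0 \<longrightarrow> v (x * y) = v x + v y) \<and>
     (\<forall>x\<in>K. \<forall>y\<in>K. x \<noteq> 0 \<longrightarrow> y \<noteq> 0 \<longrightarrow> x + y \<noteq> 0 \<longrightarrow> v (x + y) \<ge> min (v x) (v y)) \<and>
     v ` (K - {0}) = UNIV"

definition v_converges :: "('a::field \<Rightarrow> int) \<Rightarrow> (nat \<Rightarrow> 'a) \<Rightarrow> 'a \<Rightarrow> bool" where
  "v_converges v f y \<longleftrightarrow> (\<forall>N::int. \<exists>M0. \<forall>M\<ge>M0. f M = y \<or> v (f M - y) \<ge> N)"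

definition v_cauchy :: "('a::field \<Rightarrow> int) \<Rightarrow> (nat \<Rightarrow> 'a) \<Rightarrow> bool" where
  "v_cauchy v f \<longleftrightarrow> (\<forall>N::int. \<exists>M0. \<forall>a\<ge>M0. \<forall>b\<ge>M0. f a = f b \<or> v (f a - f b) \<ge> N)"

definition v_complete :: "'a::field set \<Rightarrow> ('a \<Rightarrow> int) \<Rightarrow> bool" where
  "v_complete K v \<longleftrightarrow>
     (\<forall>f. (\<forall>m. f m \<in> K) \<longrightarrow> v_cauchy v f \<longrightarrow> (\<exists>y\<in>K. v_converges v f y))"

text \<open>k \<subseteq> K is a coefficient field: it maps isomorphically onto the residue field
  O_K / m_K (this is how the residue field k is regarded as a subfield of K in the
  expansions x = sum x_l t^(-l), x_l in k).\<close>
definition coefficient_field :: "'a::field set \<Rightarrow> ('a \<Rightarrow> int) \<Rightarrow> 'a set \<Rightarrow> bool" where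
  "coefficient_field K v k \<longleftrightarrow> is_subfield k \<and> k \<subseteq> K \<and>
     (\<forall>a\<in>k. a \<noteq> 0 \<longrightarrow> v a = 0) \<and>
     (\<forall>u\<in>K. u \<noteq> 0 \<longrightarrow> v u = 0 \<longrightarrow> (\<exists>a\<in>k. u = a \<or> v (u - a) > 0))"

definition algebraically_closed_subfield :: "'a::field set \<Rightarrow> bool" where
  "algebraically_closed_subfield k \<longleftrightarrow>
     (\<forall>(c::nat \<Rightarrow> 'a) d. d > 0 \<longrightarrow> (\<forall>i\<le>d. c i \<in> k) \<longrightarrow> c d \<noteq> 0 \<longrightarrow>
        (\<exists>x\<in>k. (\<Sum>i\<le>d. c i * x ^ i) = 0))"

definition is_expansion :: "('a::field \<Rightarrow> int) \<Rightarrow> 'a set \<Rightarrow> 'a \<Rightarrow> 'a \<Rightarrow> (int \<Rightarrow> 'a) \<Rightarrow> bool" where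
  "is_expansion v k t x c \<longleftrightarrow> (\<forall>l. c l \<in> k) \<and> (\<exists>N. \<forall>l<N. c l = 0) \<and>
     v_converges v (\<lambda>M. \<Sum>l\<in>{- int M..int M}. c l * t powi (- l)) x"

definition coef :: "('a::field \<Rightarrow> int) \<Rightarrow> 'a set \<Rightarrow> 'a \<Rightarrow> 'a \<Rightarrow> int \<Rightarrow> 'a" where
  "coef v k t x l = (THE c. is_expansion v k t x c) l"

definition field_auts_fixing :: "'a::field set \<Rightarrow> ('a \<Rightarrow> 'a) set" where
  "field_auts_fixing K = {\<sigma>. bij \<sigma> \<and> (\<forall>x y. \<sigma> (x + y) = \<sigma> x + \<sigma> y \<and> \<sigma> (x * y) = \<sigma> x * \<sigma> y)
      \<and> \<sigma> 1 = 1 \<and> (\<forall>x\<in>K. \<sigma> x = x)}"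

definition Gal :: "'a::field set \<Rightarrow> ('a \<Rightarrow> 'a) monoid" where
  "Gal K = \<lparr>carrier = field_auts_fixing K, mult = (\<circ>), one = id\<rparr>"

definition finite_over :: "'a::field set \<Rightarrow> bool" where
  "finite_over K \<longleftrightarrow> (\<exists>B. finite B \<and> (\<forall>x. \<exists>c. (\<forall>b\<in>B. c b \<in> K) \<and> x = (\<Sum>b\<in>B. c b * b)))"

definition finite_galois :: "'a::field set \<Rightarrow> bool" where
  "finite_galois K \<longleftrightarrow> finite_over K \<and> {x. \<forall>\<sigma>\<in>field_auts_fixing K. \<sigma> x = x} = K"

text \<open>UT_n(F_p): n x n unitriangular matrices over F_p = {0..p-1}, indices 0..n-1,
  entries outside the n x n block set to 0.\<close>
definition UT_Fp :: "nat \<Rightarrow> nat \<Rightarrow> (nat \<Rightarrow> nat \<Rightarrow> nat) monoid" where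
  "UT_Fp n p = \<lparr>carrier = {M. (\<forall>i j. M i j < p) \<and> (\<forall>i j. \<not> (i < n \<and> j < n) \<longrightarrow> M i j = 0)
        \<and> (\<forall>i<n. M i i = 1) \<and> (\<forall>i j. j < i \<longrightarrow> M i j = 0)},
     mult = (\<lambda>A B. (\<lambda>i j. if i < n \<and> j < n then (\<Sum>k<n. A i k * B k j) mod p else 0)),
     one = (\<lambda>i j. if i < n \<and> i = j then 1 else 0)\<rparr>"

definition in_UT :: "nat \<Rightarrow> 'a::field set \<Rightarrow> (nat \<Rightarrow> nat \<Rightarrow> 'a) \<Rightarrow> bool" where
  "in_UT n F M \<longleftrightarrow> (\<forall>i<n. \<forall>j<n. M i j \<in> F \<and> (i = j \<longrightarrow> M i j = 1) \<and> (j < i \<longrightarrow> M i j = 0))"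

definition frob_eq :: "nat \<Rightarrow> nat \<Rightarrow> (nat \<Rightarrow> nat \<Rightarrow> 'a::field) \<Rightarrow> (nat \<Rightarrow> nat \<Rightarrow> 'a) \<Rightarrow> bool" where
  "frob_eq n p X A \<longleftrightarrow> (\<forall>i<n. \<forall>j<n. (\<Sum>k<n. X i k ^ p * A k j) = X i j)"

end

(*
  Transport the Galois action along Gal(L/K) = UT_n(F_p): the requirement becomes
  sigma(Theta) = rho(sigma) Theta, where rho(sigma) is the image of sigma^-1. Theta and A are
  built one superdiagonal at a time. The new entry theta = Theta_ij must satisfy
  sigma(theta) = theta + F(sigma), with F determined by the entries closer to the diagonal;
  F is an additive cocycle, so theta exists by the additive Hilbert 90. The entry
  a = theta - theta^p - R forced by Theta^(p) A = Theta is then Galois invariant, hence in K,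
  and changing theta by b in K changes a by b - b^p. By completeness and the algebraic
  closedness of k, every element of K is congruent modulo {b^p - b} to one without terms at
  the exponents in pZ and in Z>=0.

  For another solution Theta', the matrix Theta' Theta^-1 is fixed by the Frobenius, so its
  entries lie in F_p. An automorphism fixing the entries of Theta' therefore has
  rho(sigma) = 1, i.e. it is the identity, and by Dedekind's independence of characters a
  subring of L that contains K and separates Gal(L/K) is all of L.
*)

theory Submission
  imports Defs "Jordan_Normal_Form.Determinant" "HOL-Computational_Algebra.Polynomial"
    "HOL-Number_Theory.Cong"
begin

lemma frobenius_field_hom:
  assumes "prime p" "CHAR('a::field) = p"
  shows "field_hom (\<lambda>x::'a. x ^ p)"
  by unfold_locales
    (use assms freshmans_dream[where 'a='a] prime_gt_0_nat[OF assms(1)] in \<open>auto simp: power_mult_distrib\<close>)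

lemma of_nat_eq_CHAR_imp_eq:
  assumes "CHAR('a::field) = p" "a < p" "b < p" "(of_nat a :: 'a) = of_nat b"
  shows "a = b"
  using assms of_nat_eq_iff_cong_CHAR[of a b, where 'a='a] by (simp add: cong_def)

lemma of_nat_mod_CHAR: "(of_nat (x mod CHAR('a)) :: 'a::field) = of_nat x"
  by (simp add: of_nat_eq_iff_cong_CHAR)

lemma frobenius_fixed_imp_of_nat:
  assumes p: "prime p" "CHAR('a::field) = p" and x: "x ^ p = x"
  shows "\<exists>c. x = (of_nat c :: 'a)"
proof -
  interpret frob: field_hom "\<lambda>x::'a. x ^ p" by (rule frobenius_field_hom[OF p])
  have p2: "p \<ge> 2" using prime_ge_2_nat[OF p(1)] .
  define P :: "'a poly" where "P = monom 1 p + - [:0, 1:]"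
  have "degree P = p" unfolding P_def using p2 by (subst degree_add_eq_left) (auto simp: degree_monom_eq)
  then have "P \<noteq> 0" using p2 by auto
  have roots: "{y. y ^ p = y} = {y. poly P y = 0}" by (simp add: P_def poly_monom)
  have "of_nat ` {..<p} \<subseteq> {y::'a. y ^ p = y}" using frob.hom_of_nat by auto
  moreover have "finite {y::'a. y ^ p = y}" unfolding roots by (rule poly_roots_finite[OF \<open>P \<noteq> 0\<close>])
  moreover have "card {y::'a. y ^ p = y} \<le> card (of_nat ` {..<p} :: 'a set)"
  proof -
    have "inj_on (of_nat :: nat \<Rightarrow> 'a) {..<p}"
      by (rule inj_onI) (use of_nat_eq_CHAR_imp_eq[OF p(2)] in auto)
    then show ?thesis
      unfolding roots using card_poly_roots_bound[OF \<open>P \<noteq> 0\<close>] \<open>degree P = p\<close> by (simp add: card_image)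
  qed
  ultimately have "of_nat ` {..<p} = {y::'a. y ^ p = y}" using card_seteq by blast
  then show ?thesis using x by blast
qed

lemma field_auts_fixing_field_hom: "\<sigma> \<in> field_auts_fixing K \<Longrightarrow> field_hom \<sigma>"
  unfolding field_auts_fixing_def by unfold_locales (auto, metis add_cancel_right_right)

lemma field_auts_fixing_zero:
  assumes "\<sigma> \<in> field_auts_fixing K" shows "\<sigma> 0 = 0"
proof -
  interpret field_hom \<sigma> by (rule field_auts_fixing_field_hom[OF assms])
  show ?thesis by simp
qed

lemma field_auts_fixing_fixes: "\<sigma> \<in> field_auts_fixing K \<Longrightarrow> x \<in> K \<Longrightarrow> \<sigma> x = x"
  and field_auts_fixing_bij: "\<sigma> \<in> field_auts_fixing K \<Longrightarrow> bij \<sigma>"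
  unfolding field_auts_fixing_def by auto

lemma id_in_field_auts_fixing: "id \<in> field_auts_fixing K"
  unfolding field_auts_fixing_def by auto

lemma comp_in_field_auts_fixing:
  "\<sigma> \<in> field_auts_fixing K \<Longrightarrow> \<tau> \<in> field_auts_fixing K \<Longrightarrow> \<sigma> \<circ> \<tau> \<in> field_auts_fixing K"
  unfolding field_auts_fixing_def by (auto intro: bij_comp)

lemma field_auts_fixing_inv_cancel:
  assumes "\<sigma> \<in> field_auts_fixing K"
  shows "inv_into UNIV \<sigma> \<circ> \<sigma> = id" and "\<sigma> \<circ> inv_into UNIV \<sigma> = id"
  using field_auts_fixing_bij[OF assms]
  by (metis bij_is_inj inv_o_cancel, metis bij_is_surj surj_iff)

lemma inv_in_field_auts_fixing:
  assumes s: "\<sigma> \<in> field_auts_fixing K"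
  shows "inv_into UNIV \<sigma> \<in> field_auts_fixing K"
proof -
  interpret field_hom \<sigma> by (rule field_auts_fixing_field_hom[OF s])
  let ?\<sigma>' = "inv_into UNIV \<sigma>"
  have bij: "bij \<sigma>" by (rule field_auts_fixing_bij[OF s])
  have cancel: "?\<sigma>' (\<sigma> x) = x" "\<sigma> (?\<sigma>' x) = x" for x
    using bij by (simp_all add: bij_is_inj bij_is_surj surj_f_inv_f)
  have "?\<sigma>' (x + y) = ?\<sigma>' x + ?\<sigma>' y" "?\<sigma>' (x * y) = ?\<sigma>' x * ?\<sigma>' y" for x y
    by (metis cancel hom_add, metis cancel hom_mult)
  moreover have "?\<sigma>' 1 = 1" by (metis cancel(1) hom_one)
  moreover have "?\<sigma>' x = x" if "x \<in> K" for x
    by (metis cancel(1) field_auts_fixing_fixes[OF s that])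
  ultimately show ?thesis using bij_imp_bij_inv[OF bij] unfolding field_auts_fixing_def by auto
qed

section \<open>Complete discretely valued fields of characteristic \<open>p\<close>\<close>

text \<open>\<open>val_ge v x N\<close> means \<open>v x \<ge> N\<close> under the convention \<open>v 0 = \<infinity>\<close>; the
  valuation itself leaves \<open>v 0\<close> unspecified.\<close>

definition val_ge :: "('a::field \<Rightarrow> int) \<Rightarrow> 'a \<Rightarrow> int \<Rightarrow> bool" where
  "val_ge v x N \<longleftrightarrow> x = 0 \<or> N \<le> v x"

locale complete_dvf =
  fixes K k :: "'a::field set" and v :: "'a \<Rightarrow> int" and t :: 'a and p :: nat
  assumes prime_p: "prime p" and char_p: "CHAR('a) = p"
    and subfield_K: "is_subfield K" and valuation: "normalized_discrete_valuation K v"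
    and complete: "v_complete K v" and coefficients: "coefficient_field K v k"
    and k_closed: "algebraically_closed_subfield k"
    and t_in_K: "t \<in> K" and t_nonzero: "t \<noteq> 0" and v_t: "v t = -1"
begin

sublocale frob: field_hom "\<lambda>x::'a. x ^ p"
  by (rule frobenius_field_hom[OF prime_p char_p])

lemma p_ge_2: "p \<ge> 2"
  using prime_p prime_ge_2_nat by blast

lemma K_zero: "0 \<in> K" and K_one: "1 \<in> K"
  and K_add: "x \<in> K \<Longrightarrow> y \<in> K \<Longrightarrow> x + y \<in> K"
  and K_diff: "x \<in> K \<Longrightarrow> y \<in> K \<Longrightarrow> x - y \<in> K"
  and K_mult: "x \<in> K \<Longrightarrow> y \<in> K \<Longrightarrow> x * y \<in> K"
  using subfield_K unfolding is_subfield_def by auto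

lemma K_uminus: "x \<in> K \<Longrightarrow> - x \<in> K"
  using K_diff[OF K_zero] by fastforce

lemma K_inverse: "x \<in> K \<Longrightarrow> inverse x \<in> K"
  using subfield_K K_zero unfolding is_subfield_def by (cases "x = 0") auto

lemma K_power: "x \<in> K \<Longrightarrow> x ^ m \<in> K"
  by (induction m) (auto intro: K_mult K_one)

lemma K_power_int: "x \<in> K \<Longrightarrow> x powi m \<in> K"
  by (cases "m \<ge> 0") (auto simp: power_int_def K_power K_inverse)

lemma K_sum: "(\<And>i. i \<in> S \<Longrightarrow> f i \<in> K) \<Longrightarrow> sum f S \<in> K"
  by (induction S rule: infinite_finite_induct) (auto intro: K_add K_zero)

lemma k_subset_K: "k \<subseteq> K"
  and k_zero: "0 \<in> k" and k_one: "1 \<in> k"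
  and k_add: "x \<in> k \<Longrightarrow> y \<in> k \<Longrightarrow> x + y \<in> k"
  and k_diff: "x \<in> k \<Longrightarrow> y \<in> k \<Longrightarrow> x - y \<in> k"
  using coefficients unfolding coefficient_field_def is_subfield_def by auto

lemma v_k: "a \<in> k \<Longrightarrow> a \<noteq> 0 \<Longrightarrow> v a = 0"
  and residue_rep: "u \<in> K \<Longrightarrow> u \<noteq> 0 \<Longrightarrow> v u = 0 \<Longrightarrow> \<exists>a\<in>k. u = a \<or> v (u - a) > 0"
  using coefficients unfolding coefficient_field_def by auto

lemma v_mult: "x \<in> K \<Longrightarrow> y \<in> K \<Longrightarrow> x \<noteq> 0 \<Longrightarrow> y \<noteq> 0 \<Longrightarrow> v (x * y) = v x + v y"
  and v_add: "x \<in> K \<Longrightarrow> y \<in> K \<Longrightarrow> x \<noteq> 0 \<Longrightarrow> y \<noteq> 0 \<Longrightarrow> x + y \<noteq> 0 \<Longrightarrow>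
    min (v x) (v y) \<le> v (x + y)"
  using valuation unfolding normalized_discrete_valuation_def by auto

lemma v_one: "v 1 = 0"
  using v_mult[OF K_one K_one] by simp

lemma v_uminus: "x \<in> K \<Longrightarrow> x \<noteq> 0 \<Longrightarrow> v (- x) = v x"
proof -
  have "v (-1) = 0" using v_mult[OF K_uminus[OF K_one] K_uminus[OF K_one]] v_one by simp
  then show "x \<in> K \<Longrightarrow> x \<noteq> 0 \<Longrightarrow> v (- x) = v x" using v_mult[OF K_uminus[OF K_one], of x] by simp
qed

lemma v_power: "x \<in> K \<Longrightarrow> x \<noteq> 0 \<Longrightarrow> v (x ^ m) = int m * v x"
  by (induction m) (auto simp: v_one v_mult K_power algebra_simps)

lemma v_t_power_int: "v (t powi m) = - m"
proof (cases "m \<ge> 0")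
  case True
  then show ?thesis using v_power[OF t_in_K t_nonzero, of "nat m"] v_t by (simp add: power_int_def)
next
  case False
  have "t powi m * t ^ nat (- m) = 1"
    using False t_nonzero by (simp add: power_int_def field_simps)
  moreover have "v (t powi m * t ^ nat (- m)) = v (t powi m) + v (t ^ nat (- m))"
    using v_mult[OF K_power_int[OF t_in_K] K_power[OF t_in_K]] t_nonzero by simp
  ultimately have "v (t powi m) + v (t ^ nat (- m)) = 0" using v_one by simp
  then show ?thesis using False v_power[OF t_in_K t_nonzero, of "nat (- m)"] v_t by simp
qed

abbreviation vge where "vge \<equiv> val_ge v"

lemma val_ge_add: "x \<in> K \<Longrightarrow> y \<in> K \<Longrightarrow> vge x N \<Longrightarrow> vge y N \<Longrightarrow> vge (x + y) N"
  unfolding val_ge_def using v_add[of x y] by fastforce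

lemma val_ge_uminus: "x \<in> K \<Longrightarrow> vge (- x) N \<longleftrightarrow> vge x N"
  unfolding val_ge_def by (cases "x = 0") (auto simp: v_uminus)

lemma val_ge_diff: "x \<in> K \<Longrightarrow> y \<in> K \<Longrightarrow> vge x N \<Longrightarrow> vge y N \<Longrightarrow> vge (x - y) N"
  using val_ge_add[of x "- y" N] val_ge_uminus[of y N] K_uminus[of y] by simp

lemma val_ge_sum: "(\<And>i. i \<in> S \<Longrightarrow> f i \<in> K \<and> vge (f i) N) \<Longrightarrow> vge (sum f S) N"
proof (induction S rule: infinite_finite_induct)
  case (insert x F)
  then show ?case using val_ge_add[of "f x" "sum f F" N] K_sum[of F f] by auto
qed (auto simp: val_ge_def)

lemma val_ge_mult: "x \<in> K \<Longrightarrow> y \<in> K \<Longrightarrow> vge x a \<Longrightarrow> vge y b \<Longrightarrow> vge (x * y) (a + b)"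
  unfolding val_ge_def by (cases "x = 0"; cases "y = 0") (auto simp: v_mult)

lemma val_ge_mono: "vge x a \<Longrightarrow> b \<le> a \<Longrightarrow> vge x b"
  unfolding val_ge_def by auto

lemma val_ge_power: "x \<in> K \<Longrightarrow> vge x a \<Longrightarrow> vge (x ^ m) (int m * a)"
proof (induction m)
  case (Suc m)
  then have "vge (x * x ^ m) (a + int m * a)" using val_ge_mult K_power by blast
  then show ?case by (simp add: algebra_simps)
qed (simp add: val_ge_def v_one)

lemma val_ge_all_imp_zero: "(\<And>N. vge x N) \<Longrightarrow> x = 0"
  unfolding val_ge_def by (metis add_le_same_cancel1 not_one_le_zero)

lemma val_ge_t_power_int: "vge (t powi m) (- m)"
  unfolding val_ge_def using v_t_power_int by simp

lemma v_add_strict: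
  assumes x: "x \<in> K" "x \<noteq> 0" and y: "y \<in> K" "vge y (v x + 1)"
  shows "x + y \<noteq> 0 \<and> v (x + y) = v x"
proof (cases "y = 0")
  case False
  then have vy: "v y > v x" using y unfolding val_ge_def by auto
  have nz: "x + y \<noteq> 0"
  proof
    assume "x + y = 0"
    then have "y = - x" by (simp add: eq_neg_iff_add_eq_0 add.commute)
    then show False using v_uminus[OF x] vy by simp
  qed
  have "min (v x) (v y) \<le> v (x + y)" using v_add[OF x(1) y(1) x(2) False nz] .
  moreover have "min (v (x + y)) (v (- y)) \<le> v x"
    using v_add[OF K_add[OF x(1) y(1)] K_uminus[OF y(1)] nz] False x by simp
  ultimately show ?thesis using vy v_uminus[OF y(1) False] nz by linarith
qed (use x in simp)

end

section \<open>Laurent polynomials and Artin--Schreier reduction\<close>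

lemma v_converges_iff_val_ge: "v_converges v f y \<longleftrightarrow> (\<forall>N. \<exists>M0. \<forall>M\<ge>M0. val_ge v (f M - y) N)"
  unfolding v_converges_def val_ge_def by simp

lemma v_cauchy_iff_val_ge: "v_cauchy v f \<longleftrightarrow> (\<forall>N. \<exists>M0. \<forall>a\<ge>M0. \<forall>b\<ge>M0. val_ge v (f a - f b) N)"
  unfolding v_cauchy_def val_ge_def by simp

context complete_dvf
begin

definition laurent :: "int set \<Rightarrow> (int \<Rightarrow> 'a) \<Rightarrow> 'a" where
  "laurent S c = (\<Sum>l\<in>S. c l * t powi (- l))"

lemma monomial_in_K: "a \<in> k \<Longrightarrow> a * t powi (- l) \<in> K"
  using k_subset_K K_mult K_power_int[OF t_in_K] by auto

lemma v_monomial: "a \<in> k \<Longrightarrow> a \<noteq> 0 \<Longrightarrow> a * t powi (- l) \<noteq> 0 \<and> v (a * t powi (- l)) = l"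
  using v_mult[of a "t powi (- l)"] k_subset_K v_k[of a] v_t_power_int[of "- l"]
    K_power_int[OF t_in_K] t_nonzero by auto

lemma val_ge_monomial: "a \<in> k \<Longrightarrow> vge (a * t powi (- l)) l"
  using v_monomial[of a l] unfolding val_ge_def by (cases "a = 0") auto

lemma laurent_in_K: "(\<And>l. l \<in> S \<Longrightarrow> c l \<in> k) \<Longrightarrow> laurent S c \<in> K"
  unfolding laurent_def by (intro K_sum monomial_in_K)

lemma laurent_remove: "finite S \<Longrightarrow> L \<in> S \<Longrightarrow> laurent S c = c L * t powi (- L) + laurent (S - {L}) c"
  unfolding laurent_def by (rule sum.remove)

lemma laurent_fun_upd: "L \<notin> S \<Longrightarrow> laurent S (c(L := a)) = laurent S c"
  unfolding laurent_def by (intro sum.cong) auto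

lemma laurent_diff: "laurent S c - laurent S c' = laurent S (\<lambda>l. c l - c' l)"
  unfolding laurent_def by (simp add: sum_subtractf left_diff_distrib)

text \<open>The lowest nonzero term of a Laurent polynomial determines its valuation.\<close>

lemma laurent_val_ge_imp_coeff_zero:
  assumes S: "finite S" and c: "\<And>l. l \<in> S \<Longrightarrow> c l \<in> k"
    and val: "vge (laurent S c) N" and l: "l \<in> S" "l < N"
  shows "c l = 0"
proof (rule ccontr)
  assume "c l \<noteq> 0"
  define l0 where "l0 = Min {l \<in> S. c l \<noteq> 0}"
  have fin: "finite {l \<in> S. c l \<noteq> 0}" using S by simp
  have l0: "l0 \<in> S" "c l0 \<noteq> 0" "l0 < N"
    using Min_in[OF fin] Min_le[OF fin] \<open>c l \<noteq> 0\<close> l unfolding l0_def by fastforce+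
  have above: "l' > l0" if "l' \<in> S - {l0}" "c l' \<noteq> 0" for l'
    using Min_le[OF fin, of l'] that unfolding l0_def by fastforce
  have rest: "vge (laurent (S - {l0}) c) (l0 + 1)"
    unfolding laurent_def
  proof (rule val_ge_sum)
    fix l' assume l': "l' \<in> S - {l0}"
    show "c l' * t powi (- l') \<in> K \<and> vge (c l' * t powi (- l')) (l0 + 1)"
      using monomial_in_K[OF c] val_ge_monomial[OF c, of l' l'] above[OF l'] l' K_zero
      by (cases "c l' = 0") (auto simp: val_ge_def)
  qed
  have "laurent S c = c l0 * t powi (- l0) + laurent (S - {l0}) c"
    using laurent_remove[OF S l0(1)] .
  moreover have "laurent (S - {l0}) c \<in> K" using c by (intro laurent_in_K) auto
  ultimately have "laurent S c \<noteq> 0 \<and> v (laurent S c) = l0"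
    using v_add_strict[OF monomial_in_K[OF c] _ _] v_monomial[OF c[OF l0(1)] l0(2)] rest l0(1) by simp
  then show False using val l0(3) unfolding val_ge_def by simp
qed

lemma expansion_unique:
  assumes x: "x \<in> K" and c: "is_expansion v k t x c" and c': "is_expansion v k t x c'"
  shows "c = c'"
proof
  fix l
  obtain M1 where M1: "\<And>M. M \<ge> M1 \<Longrightarrow> vge (laurent {- int M..int M} c - x) (l + 1)"
    using c unfolding is_expansion_def v_converges_iff_val_ge laurent_def by blast
  obtain M2 where M2: "\<And>M. M \<ge> M2 \<Longrightarrow> vge (laurent {- int M..int M} c' - x) (l + 1)"
    using c' unfolding is_expansion_def v_converges_iff_val_ge laurent_def by blast
  define S where "S = {- int (max (max M1 M2) (nat \<bar>l\<bar>))..int (max (max M1 M2) (nat \<bar>l\<bar>))}"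
  have k: "\<And>l. c l \<in> k" "\<And>l. c' l \<in> k" using c c' unfolding is_expansion_def by auto
  have "vge ((laurent S c - x) - (laurent S c' - x)) (l + 1)"
    by (rule val_ge_diff) (use M1 M2 x k in \<open>auto simp: S_def intro!: K_diff laurent_in_K\<close>)
  then have "vge (laurent S (\<lambda>l. c l - c' l)) (l + 1)" by (simp add: laurent_diff)
  then have "c l - c' l = 0"
    by (rule laurent_val_ge_imp_coeff_zero[rotated 2]) (use k k_diff in \<open>auto simp: S_def\<close>)
  then show "c l = c' l" by simp
qed

lemma coef_laurent:
  assumes F: "finite F" and d: "\<And>l. l \<in> F \<Longrightarrow> d l \<in> k"
  shows "coef v k t (laurent F d) l = (if l \<in> F then d l else 0)"
proof -
  let ?c = "\<lambda>l. if l \<in> F then d l else 0"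
  define B where "B = Max (insert 0 (abs ` F))"
  have B: "\<And>l. l \<in> F \<Longrightarrow> \<bar>l\<bar> \<le> B" unfolding B_def using F by (intro Max_ge) auto
  have eq: "laurent {- int M..int M} ?c = laurent F d" if "nat B \<le> M" for M
  proof -
    have "F \<subseteq> {- int M..int M}" using B that by force
    then show ?thesis unfolding laurent_def
      by (simp add: if_distrib[of "\<lambda>x. x * _"] sum.If_cases Int_absorb1 cong: if_cong)
  qed
  have E: "is_expansion v k t (laurent F d) ?c"
    unfolding is_expansion_def v_converges_iff_val_ge laurent_def[symmetric]
  proof (intro conjI allI)
    show "?c l \<in> k" for l using d k_zero by auto
    show "\<exists>N. \<forall>l<N. ?c l = 0" using B by (intro exI[of _ "- B"]) force
    show "\<exists>M0. \<forall>M\<ge>M0. vge (laurent {- int M..int M} ?c - laurent F d) N" for N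
      using eq by (intro exI[of _ "nat B"]) (simp add: val_ge_def)
  qed
  have "laurent F d \<in> K" using d by (rule laurent_in_K)
  then have "(THE c. is_expansion v k t (laurent F d) c) = ?c"
    using E expansion_unique by (intro the_equality) blast+
  then show ?thesis unfolding coef_def by simp
qed

lemma exists_leading_coeff:
  assumes x: "x \<in> K" "vge x m"
  shows "\<exists>a\<in>k. vge (x - a * t powi (- m)) (m + 1)"
proof (cases "vge x (m + 1)")
  case True
  then show ?thesis using k_zero by (intro bexI[of _ 0]) auto
next
  case False
  then have x0: "x \<noteq> 0" and vx: "v x = m" using x(2) unfolding val_ge_def by auto
  define y where "y = x * t powi m"
  have yK: "y \<in> K" unfolding y_def using x(1) K_mult K_power_int[OF t_in_K] by auto
  have "y \<noteq> 0" "v y = 0"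
    using v_mult[OF x(1) K_power_int[OF t_in_K] x0] v_t_power_int vx t_nonzero x0 by (auto simp: y_def)
  then obtain a where a: "a \<in> k" "vge (y - a) 1"
    using residue_rep[OF yK] unfolding val_ge_def by force
  have "t powi m * t powi (- m) = 1" using t_nonzero by (simp flip: power_int_add)
  then have "x - a * t powi (- m) = (y - a) * t powi (- m)"
    by (simp add: y_def algebra_simps)
  moreover have "vge ((y - a) * t powi (- m)) (1 + m)"
    using val_ge_mult[OF _ K_power_int[OF t_in_K] a(2) val_ge_t_power_int[of "- m"]]
      K_diff[OF yK] a(1) k_subset_K by auto
  ultimately show ?thesis using a(1) by (intro bexI[of _ a]) (auto simp: add.commute)
qed

lemma exists_laurent_approx:
  "x \<in> K \<Longrightarrow> vge x (- int d) \<Longrightarrow> \<exists>c. (\<forall>l. c l \<in> k) \<and> vge (x - laurent {- int d..<0} c) 0"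
proof (induction d arbitrary: x)
  case 0
  then show ?case using k_zero by (intro exI[of _ "\<lambda>_. 0"]) (simp add: laurent_def)
next
  case (Suc d)
  define L where "L = - int (Suc d)"
  have "L + 1 = - int d" by (simp add: L_def)
  then obtain a where a: "a \<in> k" "vge (x - a * t powi (- L)) (- int d)"
    using exists_leading_coeff[OF Suc.prems(1)] Suc.prems(2) unfolding L_def by metis
  obtain c where c: "\<forall>l. c l \<in> k" "vge (x - a * t powi (- L) - laurent {- int d..<0} c) 0"
    using Suc.IH[OF K_diff[OF Suc.prems(1) monomial_in_K[OF a(1)]] a(2)] by blast
  have ivl: "{- int (Suc d)..<0} = insert L {- int d..<0}" and L: "L \<notin> {- int d..<0}"
    by (auto simp: L_def)
  have eq: "laurent {- int (Suc d)..<0} (c(L := a)) = a * t powi (- L) + laurent {- int d..<0} c"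
    unfolding ivl using laurent_remove[of "insert L {- int d..<0}" L "c(L := a)"] laurent_fun_upd[OF L]
    by (simp add: Diff_insert_absorb[OF L])
  show ?case
  proof (intro exI conjI)
    show "\<forall>l. (c(L := a)) l \<in> k" using c(1) a(1) by simp
    show "vge (x - laurent {- int (Suc d)..<0} (c(L := a))) 0" unfolding eq using c(2) by (simp add: algebra_simps)
  qed
qed

lemma k_root_power_p_linear:
  assumes "a \<in> k" "b \<in> k"
  shows "\<exists>x\<in>k. x ^ p + a * x + b = 0"
proof -
  define c where "c i = (if i = p then 1 else if i = 1 then a else if i = 0 then b else 0)" for i
  have "\<forall>i\<le>p. c i \<in> k" using assms k_zero k_one by (simp add: c_def)
  moreover have "c p \<noteq> 0" "p > 0" using p_ge_2 by (simp_all add: c_def)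
  ultimately obtain x where x: "x \<in> k" "(\<Sum>i\<le>p. c i * x ^ i) = 0"
    using k_closed[unfolded algebraically_closed_subfield_def, rule_format, of p c] by blast
  have "(\<Sum>i\<le>p. c i * x ^ i) = (\<Sum>i\<in>{p, 1, 0}. c i * x ^ i)"
    using p_ge_2 by (intro sum.mono_neutral_right) (auto simp: c_def)
  also have "\<dots> = x ^ p + a * x + b" using p_ge_2 by (simp add: c_def)
  finally show ?thesis using x by auto
qed

lemma fast_cauchy_converges:
  assumes s: "\<And>R. s R \<in> K" and step: "\<And>a b. b \<le> a \<Longrightarrow> vge (s a - s b) (int b)"
  shows "\<exists>y\<in>K. \<forall>R. vge (y - s R) (int R)"
proof -
  have "vge (s a - s b) N" if "nat N \<le> a" "nat N \<le> b" for a b N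
  proof (cases "b \<le> a")
    case True
    then show ?thesis using step[OF True] that val_ge_mono by fastforce
  next
    case False
    then have "vge (s a - s b) (int a)"
      using step[of a b] val_ge_uminus[OF K_diff[OF s s], of b a "int a"] by simp
    then show ?thesis using that val_ge_mono by fastforce
  qed
  then have "v_cauchy v s" unfolding v_cauchy_iff_val_ge by blast
  then obtain y where y: "y \<in> K" "v_converges v s y" using complete s unfolding v_complete_def by blast
  have "vge (y - s R) (int R)" for R
  proof -
    obtain M0 where M0: "\<And>M. M \<ge> M0 \<Longrightarrow> vge (s M - y) (int R)"
      using y(2) unfolding v_converges_iff_val_ge by blast
    have "vge ((s (max M0 R) - s R) - (s (max M0 R) - y)) (int R)"
      by (rule val_ge_diff) (use M0 step s y(1) in \<open>auto intro: K_diff\<close>)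
    then show ?thesis by simp
  qed
  then show ?thesis using y(1) by blast
qed

lemma val_ge_power_p_power:
  assumes "m \<in> K" "vge m 1"
  shows "vge (m ^ p ^ r) (int r)"
proof -
  have "r \<le> p ^ r" using less_exp[of r] power_mono[OF p_ge_2, of r] by linarith
  then show ?thesis using val_ge_power[OF assms, of "p ^ r"] val_ge_mono by fastforce
qed

lemma artin_schreier_series_converges:
  assumes m: "m \<in> K" "vge m 1"
  shows "\<exists>y\<in>K. \<forall>R. vge (y + (\<Sum>r<R. m ^ p ^ r)) (int R)"
proof -
  have mK: "m ^ p ^ r \<in> K" for r using K_power[OF m(1)] .
  have "\<exists>y\<in>K. \<forall>R. vge (y - - (\<Sum>r<R. m ^ p ^ r)) (int R)"
  proof (rule fast_cauchy_converges)
    show "- (\<Sum>r<R. m ^ p ^ r) \<in> K" for R by (intro K_uminus K_sum mK)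
    show "vge (- (\<Sum>r<a. m ^ p ^ r) - - (\<Sum>r<b. m ^ p ^ r)) (int b)" if "b \<le> a" for a b
    proof -
      have "(\<Sum>r<a. m ^ p ^ r) = (\<Sum>r<b. m ^ p ^ r) + (\<Sum>r\<in>{b..<a}. m ^ p ^ r)"
        using sum.atLeastLessThan_concat[of 0 b a "\<lambda>r. m ^ p ^ r"] that by (simp add: atLeast0LessThan)
      moreover have "vge (\<Sum>r\<in>{b..<a}. m ^ p ^ r) (int b)"
      proof (rule val_ge_sum)
        fix r assume "r \<in> {b..<a}"
        then show "m ^ p ^ r \<in> K \<and> vge (m ^ p ^ r) (int b)"
          using mK val_ge_mono[OF val_ge_power_p_power[OF m, of r]] by simp
      qed
      moreover have "(\<Sum>r\<in>{b..<a}. m ^ p ^ r) \<in> K" by (intro K_sum mK)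
      ultimately show ?thesis using val_ge_uminus by simp
    qed
  qed
  then show ?thesis by simp
qed

lemma artin_schreier_solvable_pos:
  assumes m: "m \<in> K" "vge m 1"
  shows "\<exists>y\<in>K. y ^ p - y = m"
proof -
  define s where "s R = - (\<Sum>r<R. m ^ p ^ r)" for R
  obtain y where y: "y \<in> K" "\<And>R. vge (y - s R) (int R)"
    using artin_schreier_series_converges[OF m] by (auto simp: s_def)
  have telescope: "s R ^ p - s R = m - m ^ p ^ R" for R
  proof -
    have "s R ^ p = - (\<Sum>r<R. m ^ p ^ Suc r)"
      unfolding s_def frob.hom_uminus frob.hom_sum by (simp add: power_mult[symmetric] mult.commute)
    then show ?thesis
      using sum_lessThan_telescope[of "\<lambda>r. m ^ p ^ r" R] by (simp add: s_def sum_subtractf)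
        (simp add: algebra_simps)
  qed
  have "vge (y ^ p - y - m) (int R)" for R
  proof -
    have "s R \<in> K" unfolding s_def by (intro K_uminus K_sum K_power m(1))
    then have yR: "y - s R \<in> K" "vge (y - s R) (int R)" using y K_diff by auto
    have "vge ((y - s R) ^ p) (int R)"
      using val_ge_power[OF yR, of p] p_ge_2 val_ge_mono[of _ "int p * int R"] by (simp add: mult_le_cancel_right1)
    then have "vge ((y - s R) ^ p - (y - s R)) (int R)"
      using val_ge_diff[OF K_power[OF yR(1)] yR(1)] yR(2) by blast
    then have "vge ((y - s R) ^ p - (y - s R) - m ^ p ^ R) (int R)"
      using val_ge_diff[OF K_diff[OF K_power[OF yR(1)] yR(1)] K_power[OF m(1)]] val_ge_power_p_power[OF m]
      by blast
    moreover have "(y - s R) ^ p - (y - s R) - m ^ p ^ R = y ^ p - y - m"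
      using telescope[of R] by (simp add: frob.hom_minus algebra_simps)
    ultimately show ?thesis by simp
  qed
  then have "y ^ p - y - m = 0"
    by (intro val_ge_all_imp_zero) (metis val_ge_mono int_nat_eq linorder_le_cases)
  then show ?thesis using y(1) by auto
qed

lemma artin_schreier_solvable_nonneg:
  assumes x: "x \<in> K" "vge x 0"
  shows "\<exists>b\<in>K. b ^ p - b = x"
proof -
  obtain \<alpha> where \<alpha>: "\<alpha> \<in> k" "vge (x - \<alpha>) 1"
    using exists_leading_coeff[OF x] by auto
  obtain \<beta> where \<beta>: "\<beta> \<in> k" "\<beta> ^ p - \<beta> = \<alpha>"
    using k_root_power_p_linear[of "- 1" "- \<alpha>"] \<alpha>(1) k_diff[OF k_zero] k_one
    by (metis add_uminus_conv_diff diff_0 eq_iff_diff_eq_0 mult_minus1)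
  obtain y where y: "y \<in> K" "y ^ p - y = x - \<alpha>"
    using artin_schreier_solvable_pos[OF K_diff[OF x(1)] \<alpha>(2)] \<alpha>(1) k_subset_K by blast
  have "(\<beta> + y) ^ p - (\<beta> + y) = x" using \<beta> y by (simp add: frob.hom_add algebra_simps)
  moreover have "\<beta> + y \<in> K" using k_subset_K \<beta>(1) y(1) K_add by auto
  ultimately show ?thesis by blast
qed

lemma p_multiple_in_neg_interval:
  assumes "- int (Suc d) = int p * m"
  shows "m \<in> {- int d..<0}"
proof -
  have "m < 0"
  proof (rule ccontr)
    assume "\<not> m < 0"
    then have "int p * m \<ge> 0" by simp
    then show False using assms by simp
  qed
  moreover from this have "int p * m \<le> 2 * m" using p_ge_2 by (simp add: mult_right_mono_neg)
  then have "- int d \<le> m" using assms by linarith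
  ultimately show ?thesis by simp
qed

lemma monomial_pth_root: "a \<in> k \<Longrightarrow> \<exists>\<gamma>\<in>k. (\<gamma> * t powi (- m)) ^ p = a * t powi (- (int p * m))"
  using k_root_power_p_linear[OF k_zero k_diff[OF k_zero]]
  by (fastforce simp: power_mult_distrib power_int_power' algebra_simps)

lemma artin_schreier_prune:
  assumes "\<And>l. c l \<in> k"
  shows "\<exists>b\<in>K. \<exists>c'. (\<forall>l. c' l \<in> k) \<and> (\<forall>l. int p dvd l \<longrightarrow> c' l = 0) \<and>
    laurent {- int d..<0} c - (b ^ p - b) = laurent {- int d..<0} c'"
  using assms
proof (induction d arbitrary: c)
  case 0
  show ?case using K_zero k_zero p_ge_2 by (intro bexI[of _ 0] exI[of _ "\<lambda>_. 0"]) (auto simp: laurent_def)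
next
  case (Suc d)
  define L where "L = - int (Suc d)"
  define I where "I = {- int d..<0}"
  have L: "L \<notin> I" "finite I" by (auto simp: L_def I_def)
  have "{- int (Suc d)..<0} = insert L I" by (auto simp: L_def I_def)
  then have laurent_Suc: "laurent {- int (Suc d)..<0} c = c L * t powi (- L) + laurent I c" for c
    using laurent_remove[of "insert L I" L] L by (simp add: Diff_insert_absorb)
  show ?case
  proof (cases "int p dvd L")
    case False
    obtain b c' where b: "b \<in> K" "\<forall>l. c' l \<in> k" "\<forall>l. int p dvd l \<longrightarrow> c' l = 0"
      "laurent I c - (b ^ p - b) = laurent I c'"
      using Suc I_def by blast
    show ?thesis
    proof (intro bexI[of _ b] exI[of _ "c'(L := c L)"] conjI)
      show "laurent {- int (Suc d)..<0} c - (b ^ p - b) = laurent {- int (Suc d)..<0} (c'(L := c L))"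
        using b(4) by (simp only: laurent_Suc laurent_fun_upd[OF L(1)] fun_upd_same) (simp add: algebra_simps)
      show "\<forall>l. (c'(L := c L)) l \<in> k" using b(2) Suc.prems by simp
      show "\<forall>l. int p dvd l \<longrightarrow> (c'(L := c L)) l = 0" using b(3) False by simp
    qed (fact b(1))
  next
    case True
    then obtain m where m: "L = int p * m" by (auto elim: dvdE)
    then have "m \<in> I" using p_multiple_in_neg_interval unfolding L_def I_def by blast
    obtain \<gamma> where \<gamma>: "\<gamma> \<in> k" "(\<gamma> * t powi (- m)) ^ p = c L * t powi (- L)"
      using monomial_pth_root[of "c L" m] Suc.prems unfolding m by blast
    define c2 where "c2 = c(m := c m + \<gamma>)"
    have "c2 l \<in> k" for l using Suc.prems \<gamma>(1) k_add by (simp add: c2_def)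
    then obtain b2 c' where b2: "b2 \<in> K" "\<forall>l. c' l \<in> k" "\<forall>l. int p dvd l \<longrightarrow> c' l = 0"
      "laurent I c2 - (b2 ^ p - b2) = laurent I c'"
      using Suc.IH[of c2] unfolding I_def by blast
    have "laurent I c2 = laurent I c + \<gamma> * t powi (- m)"
      using laurent_remove[OF L(2) \<open>m \<in> I\<close>, of c2] laurent_remove[OF L(2) \<open>m \<in> I\<close>, of c]
        laurent_fun_upd[of m "I - {m}" c] by (simp add: c2_def algebra_simps)
    then have eq: "laurent {- int (Suc d)..<0} c - ((b2 + \<gamma> * t powi (- m)) ^ p - (b2 + \<gamma> * t powi (- m)))
        = laurent {- int (Suc d)..<0} (c'(L := 0))"
      using \<gamma>(2) b2(4)
      by (simp only: laurent_Suc laurent_fun_upd[OF L(1)] fun_upd_same frob.hom_add) (simp add: algebra_simps)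
    show ?thesis
    proof (intro bexI[of _ "b2 + \<gamma> * t powi (- m)"] exI[of _ "c'(L := 0)"] conjI)
      show "\<forall>l. (c'(L := 0)) l \<in> k" using b2(2) k_zero by simp
      show "\<forall>l. int p dvd l \<longrightarrow> (c'(L := 0)) l = 0" using b2(3) by simp
      show "b2 + \<gamma> * t powi (- m) \<in> K" using b2(1) monomial_in_K[OF \<gamma>(1)] K_add by auto
    qed (fact eq)
  qed
qed

definition reduced :: "'a \<Rightarrow> bool" where
  "reduced a \<longleftrightarrow> (\<forall>l. int p dvd l \<or> 0 \<le> l \<longrightarrow> coef v k t a l = 0)"

lemma exists_reduced_translate:
  assumes a: "a \<in> K"
  shows "\<exists>b\<in>K. reduced (a + b - b ^ p)"
proof -
  define I where "I = {- int (nat (- v a))..<0}"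
  have "vge a (- int (nat (- v a)))" by (simp add: val_ge_def)
  then obtain c where c: "\<forall>l. c l \<in> k" "vge (a - laurent I c) 0"
    using exists_laurent_approx[OF a] unfolding I_def by blast
  obtain b1 where b1: "b1 \<in> K" "b1 ^ p - b1 = a - laurent I c"
    using artin_schreier_solvable_nonneg[OF K_diff[OF a laurent_in_K] c(2)] c(1) by blast
  obtain b2 c' where b2: "b2 \<in> K" "\<forall>l. c' l \<in> k" "\<forall>l. int p dvd l \<longrightarrow> c' l = 0"
    "laurent I c - (b2 ^ p - b2) = laurent I c'"
    using artin_schreier_prune c(1) unfolding I_def by blast
  have "a + (b1 + b2) - (b1 + b2) ^ p = (a - (b1 ^ p - b1)) - (b2 ^ p - b2)"
    by (simp add: frob.hom_add algebra_simps)
  also have "\<dots> = laurent I c'" using b1(2) b2(4) by simp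
  finally have "reduced (a + (b1 + b2) - (b1 + b2) ^ p)"
    unfolding reduced_def using b2(2,3) by (simp add: coef_laurent I_def)
  then show ?thesis using b1(1) b2(1) K_add by blast
qed

end

section \<open>Dedekind independence, trace and additive Hilbert 90\<close>

inductive_set evaluation_span :: "'a::field set \<Rightarrow> (('a \<Rightarrow> 'a) \<Rightarrow> 'a) set" for E where
  eval: "e \<in> E \<Longrightarrow> (\<lambda>\<sigma>. l * \<sigma> e) \<in> evaluation_span E"
| add: "f \<in> evaluation_span E \<Longrightarrow> g \<in> evaluation_span E \<Longrightarrow> (\<lambda>\<sigma>. f \<sigma> + g \<sigma>) \<in> evaluation_span E"

lemma evaluation_span_scale: "f \<in> evaluation_span E \<Longrightarrow> (\<lambda>\<sigma>. c * f \<sigma>) \<in> evaluation_span E"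
proof (induction rule: evaluation_span.induct)
  case (eval e l)
  then show ?case using evaluation_span.eval[of e E "c * l"] by (simp add: mult.assoc)
next
  case (add f g)
  then show ?case using evaluation_span.add by (fastforce simp: distrib_left)
qed

lemma evaluation_span_sum:
  assumes "1 \<in> E" "\<And>i. i \<in> S \<Longrightarrow> F i \<in> evaluation_span E"
  shows "(\<lambda>\<sigma>. \<Sum>i\<in>S. F i \<sigma>) \<in> evaluation_span E"
  using assms(2)
proof (induction S rule: infinite_finite_induct)
  case (insert x S)
  then show ?case using evaluation_span.add[of "F x" E] by simp
qed (use evaluation_span.eval[OF assms(1), of 0] in simp_all)

lemma evaluation_span_mult_eval:
  assumes mult: "\<forall>\<sigma>\<in>H. \<forall>x y. \<sigma> (x * y) = \<sigma> x * \<sigma> y" and E: "\<forall>x\<in>E. \<forall>y\<in>E. x * y \<in> E"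
    and e: "e \<in> E"
  shows "f \<in> evaluation_span E \<Longrightarrow> \<exists>g\<in>evaluation_span E. \<forall>\<sigma>\<in>H. g \<sigma> = \<sigma> e * f \<sigma>"
proof (induction rule: evaluation_span.induct)
  case (eval e' l)
  have "(\<lambda>\<sigma>. l * \<sigma> (e * e')) \<in> evaluation_span E" using E e eval by (intro evaluation_span.eval) auto
  moreover have "\<forall>\<sigma>\<in>H. l * \<sigma> (e * e') = \<sigma> e * (l * \<sigma> e')" using mult by (simp add: algebra_simps)
  ultimately show ?case by (intro bexI[of _ "\<lambda>\<sigma>. l * \<sigma> (e * e')"])
next
  case (add f g)
  then obtain f' g' where "f' \<in> evaluation_span E" "\<forall>\<sigma>\<in>H. f' \<sigma> = \<sigma> e * f \<sigma>"
    "g' \<in> evaluation_span E" "\<forall>\<sigma>\<in>H. g' \<sigma> = \<sigma> e * g \<sigma>"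
    by blast
  then show ?case
    by (intro bexI[of _ "\<lambda>\<sigma>. f' \<sigma> + g' \<sigma>"]) (auto simp: distrib_left intro: evaluation_span.add)
qed

context
  fixes H :: "('a::field \<Rightarrow> 'a) set" and E :: "'a set"
  assumes mult: "\<forall>\<sigma>\<in>H. \<forall>x y. \<sigma> (x * y) = \<sigma> x * \<sigma> y" and one: "\<forall>\<sigma>\<in>H. \<sigma> 1 = 1"
    and E_one: "1 \<in> E" and E_mult: "\<forall>x\<in>E. \<forall>y\<in>E. x * y \<in> E"
    and separating: "\<forall>\<sigma>\<in>H. \<forall>\<tau>\<in>H. \<sigma> \<noteq> \<tau> \<longrightarrow> (\<exists>e\<in>E. \<sigma> e \<noteq> \<tau> e)"
begin

text \<open>If the indicators of the points of \<open>S\<close> lie in the span, then \<open>\<sigma> 1 - \<Sum> \<delta>\<^sub>\<sigma>\<^sub>0\<close>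
  vanishes on \<open>S\<close>; if it also vanishes at \<open>\<tau>\<close>, some \<open>\<delta>\<^sub>\<sigma>\<^sub>0\<close> is nonzero at \<open>\<tau>\<close>
  and \<open>(\<sigma> e - \<sigma>\<^sub>0 e) \<delta>\<^sub>\<sigma>\<^sub>0(\<sigma>)\<close> for an \<open>e\<close> separating \<open>\<tau>\<close> and \<open>\<sigma>\<^sub>0\<close> works instead.\<close>

lemma evaluation_span_separate_point:
  assumes S: "finite S" "S \<subseteq> H" and \<tau>: "\<tau> \<in> H" "\<tau> \<notin> S"
    and \<delta>: "\<forall>\<sigma>0\<in>S. \<delta> \<sigma>0 \<in> evaluation_span E \<and> (\<forall>\<sigma>\<in>S. \<delta> \<sigma>0 \<sigma> = (if \<sigma> = \<sigma>0 then 1 else 0))"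
  shows "\<exists>h\<in>evaluation_span E. (\<forall>\<sigma>\<in>S. h \<sigma> = 0) \<and> h \<tau> = 1"
proof -
  have normalize: "\<exists>h\<in>evaluation_span E. (\<forall>\<sigma>\<in>S. h \<sigma> = 0) \<and> h \<tau> = 1"
    if "w \<in> evaluation_span E" "\<forall>\<sigma>\<in>S. w \<sigma> = 0" "w \<tau> \<noteq> 0" for w
    using that evaluation_span_scale[OF that(1), of "1 / w \<tau>"]
    by (intro bexI[of _ "\<lambda>\<sigma>. 1 / w \<tau> * w \<sigma>"]) auto
  define w where "w = (\<lambda>\<sigma>. 1 * \<sigma> 1 + (- 1) * (\<Sum>\<sigma>0\<in>S. \<delta> \<sigma>0 \<sigma>))"
  have w: "w \<in> evaluation_span E"
    unfolding w_def using \<delta> E_one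
    by (intro evaluation_span.add evaluation_span.eval evaluation_span_scale evaluation_span_sum) auto
  have w_S: "\<forall>\<sigma>\<in>S. w \<sigma> = 0"
  proof
    fix \<sigma> assume "\<sigma> \<in> S"
    then have "(\<Sum>\<sigma>0\<in>S. \<delta> \<sigma>0 \<sigma>) = (\<Sum>\<sigma>0\<in>S. if \<sigma> = \<sigma>0 then 1 else 0)" using \<delta> by (intro sum.cong) auto
    then show "w \<sigma> = 0" using \<open>\<sigma> \<in> S\<close> S one unfolding w_def by auto
  qed
  show ?thesis
  proof (cases "w \<tau> = 0")
    case False
    then show ?thesis using normalize[OF w w_S] by blast
  next
    case True
    then have "(\<Sum>\<sigma>0\<in>S. \<delta> \<sigma>0 \<tau>) = 1" using one \<tau>(1) unfolding w_def by force
    then obtain \<sigma>0 where \<sigma>0: "\<sigma>0 \<in> S" "\<delta> \<sigma>0 \<tau> \<noteq> 0" by (metis one_neq_zero sum.neutral)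
    then obtain e where e: "e \<in> E" "\<tau> e \<noteq> \<sigma>0 e" using separating \<tau> S by (metis subsetD)
    obtain g where g: "g \<in> evaluation_span E" "\<forall>\<sigma>\<in>H. g \<sigma> = \<sigma> e * \<delta> \<sigma>0 \<sigma>"
      using evaluation_span_mult_eval[OF mult E_mult e(1)] \<delta> \<sigma>0(1) by blast
    define h where "h = (\<lambda>\<sigma>. g \<sigma> + (- \<sigma>0 e) * \<delta> \<sigma>0 \<sigma>)"
    have "h \<in> evaluation_span E"
      unfolding h_def using g(1) \<delta> \<sigma>0(1) by (intro evaluation_span.add evaluation_span_scale) auto
    moreover have "\<forall>\<sigma>\<in>S. h \<sigma> = 0" using g(2) \<delta> \<sigma>0(1) S(2) unfolding h_def by auto
    moreover have "h \<tau> = \<delta> \<sigma>0 \<tau> * (\<tau> e - \<sigma>0 e)" using g(2) \<tau>(1) unfolding h_def by (simp add: algebra_simps)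
    ultimately show ?thesis using normalize \<sigma>0(2) e(2) by simp
  qed
qed

lemma evaluation_span_indicator:
  assumes "finite S" "S \<subseteq> H" "\<sigma>0 \<in> S"
  shows "\<exists>f\<in>evaluation_span E. \<forall>\<sigma>\<in>S. f \<sigma> = (if \<sigma> = \<sigma>0 then 1 else 0)"
  using assms
proof (induction S arbitrary: \<sigma>0 rule: finite_induct)
  case (insert \<tau> S)
  then have ex: "\<forall>\<sigma>0\<in>S. \<exists>f. f \<in> evaluation_span E \<and> (\<forall>\<sigma>\<in>S. f \<sigma> = (if \<sigma> = \<sigma>0 then 1 else 0))"
    by blast
  obtain \<delta> where \<delta>: "\<forall>\<sigma>0\<in>S. \<delta> \<sigma>0 \<in> evaluation_span E \<and> (\<forall>\<sigma>\<in>S. \<delta> \<sigma>0 \<sigma> = (if \<sigma> = \<sigma>0 then 1 else 0))"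
    using bchoice[OF ex] by blast
  obtain h where h: "h \<in> evaluation_span E" "\<forall>\<sigma>\<in>S. h \<sigma> = 0" "h \<tau> = 1"
    using evaluation_span_separate_point[OF insert(1) _ _ insert(2) \<delta>] insert(4) by blast
  show ?case
  proof (cases "\<sigma>0 = \<tau>")
    case True
    then show ?thesis using h by (intro bexI[of _ h]) auto
  next
    case False
    then have "\<sigma>0 \<in> S" using insert(5) by simp
    define f where "f = (\<lambda>\<sigma>. \<delta> \<sigma>0 \<sigma> + (- \<delta> \<sigma>0 \<tau>) * h \<sigma>)"
    have "f \<in> evaluation_span E"
      unfolding f_def using \<delta> \<open>\<sigma>0 \<in> S\<close> h by (intro evaluation_span.add evaluation_span_scale) auto
    moreover have "\<forall>\<sigma>\<in>insert \<tau> S. f \<sigma> = (if \<sigma> = \<sigma>0 then 1 else 0)"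
      using \<delta> \<open>\<sigma>0 \<in> S\<close> h False unfolding f_def by auto
    ultimately show ?thesis by blast
  qed
qed simp

end

locale finite_galois_ext =
  fixes K :: "'a::field set"
  assumes finite_auts: "finite (field_auts_fixing K)"
    and fixed_field: "{x. \<forall>\<sigma>\<in>field_auts_fixing K. \<sigma> x = x} = K"
begin

abbreviation G where "G \<equiv> field_auts_fixing K"

lemma sum_G_reindex: "\<sigma> \<in> G \<Longrightarrow> (\<Sum>\<tau>\<in>G. g (\<sigma> \<circ> \<tau>)) = (\<Sum>\<tau>\<in>G. g \<tau>)"
  by (rule sum.reindex_bij_witness[of G "\<lambda>\<mu>. inv_into UNIV \<sigma> \<circ> \<mu>" "\<lambda>\<tau>. \<sigma> \<circ> \<tau>"])
    (auto simp: o_assoc field_auts_fixing_inv_cancel comp_in_field_auts_fixing inv_in_field_auts_fixing)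

lemma G_mult: "\<forall>\<sigma>\<in>G. \<forall>x y. \<sigma> (x * y) = \<sigma> x * \<sigma> y"
  and G_one: "\<forall>\<sigma>\<in>G. \<sigma> 1 = 1"
  unfolding field_auts_fixing_def by auto

definition trace :: "'a \<Rightarrow> 'a" where
  "trace y = (\<Sum>\<tau>\<in>G. \<tau> y)"

lemma trace_invariant: "\<sigma> \<in> G \<Longrightarrow> \<sigma> (trace y) = trace y"
proof -
  assume s: "\<sigma> \<in> G"
  interpret field_hom \<sigma> by (rule field_auts_fixing_field_hom[OF s])
  show ?thesis unfolding trace_def hom_sum using sum_G_reindex[OF s, of "\<lambda>\<mu>. \<mu> y"] by simp
qed

lemma trace_in_K: "trace y \<in> K"
  using trace_invariant fixed_field by blast

text \<open>Writing \<open>f = \<Sum> l\<^sub>i ev\<^sub>e\<^sub>i\<close>, the sum below equals \<open>\<Sum> trace (x l\<^sub>i) e\<^sub>i\<close>.\<close>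

lemma twisted_sum_in_span:
  assumes M: "\<forall>l. \<forall>e\<in>E. trace (x * l) * e \<in> M" and M_add: "\<forall>a\<in>M. \<forall>b\<in>M. a + b \<in> M"
  shows "f \<in> evaluation_span E \<Longrightarrow> (\<Sum>\<tau>\<in>G. \<tau> x * \<tau> (f (inv_into UNIV \<tau>))) \<in> M"
proof (induction rule: evaluation_span.induct)
  case (eval e l)
  have "(\<Sum>\<tau>\<in>G. \<tau> x * \<tau> (l * inv_into UNIV \<tau> e)) = (\<Sum>\<tau>\<in>G. \<tau> (x * l) * e)"
  proof (intro sum.cong refl)
    fix \<tau> assume t: "\<tau> \<in> G"
    interpret field_hom \<tau> by (rule field_auts_fixing_field_hom[OF t])
    have "\<tau> (inv_into UNIV \<tau> e) = e" using field_auts_fixing_inv_cancel(2)[OF t] by (metis comp_apply id_apply)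
    then show "\<tau> x * \<tau> (l * inv_into UNIV \<tau> e) = \<tau> (x * l) * e" by (simp add: hom_mult mult.assoc)
  qed
  also have "\<dots> = trace (x * l) * e" unfolding trace_def by (simp add: sum_distrib_right)
  finally show ?case using M eval by simp
next
  case (add f g)
  have "\<tau> (f (inv_into UNIV \<tau>) + g (inv_into UNIV \<tau>)) = \<tau> (f (inv_into UNIV \<tau>)) + \<tau> (g (inv_into UNIV \<tau>))"
    if "\<tau> \<in> G" for \<tau>
    using that unfolding field_auts_fixing_def by auto
  then have "(\<Sum>\<tau>\<in>G. \<tau> x * \<tau> (f (inv_into UNIV \<tau>) + g (inv_into UNIV \<tau>)))
     = (\<Sum>\<tau>\<in>G. \<tau> x * \<tau> (f (inv_into UNIV \<tau>))) + (\<Sum>\<tau>\<in>G. \<tau> x * \<tau> (g (inv_into UNIV \<tau>)))"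
    unfolding sum.distrib[symmetric] distrib_left[symmetric] by (intro sum.cong) auto
  then show ?case using add M_add by simp
qed

lemma twisted_sum_indicator:
  assumes f: "\<forall>\<sigma>\<in>G. f \<sigma> = (if \<sigma> = id then 1 else 0)"
  shows "(\<Sum>\<tau>\<in>G. \<tau> x * \<tau> (f (inv_into UNIV \<tau>))) = x"
proof -
  have "(\<Sum>\<tau>\<in>G. \<tau> x * \<tau> (f (inv_into UNIV \<tau>))) = (\<Sum>\<tau>\<in>G. if \<tau> = id then x else 0)"
  proof (intro sum.cong refl)
    fix \<tau> assume t: "\<tau> \<in> G"
    interpret field_hom \<tau> by (rule field_auts_fixing_field_hom[OF t])
    have "inv_into UNIV \<tau> = id \<longleftrightarrow> \<tau> = id"
      using field_auts_fixing_inv_cancel[OF t] by (metis comp_id id_comp)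
    then show "\<tau> x * \<tau> (f (inv_into UNIV \<tau>)) = (if \<tau> = id then x else 0)"
      using f inv_in_field_auts_fixing[OF t] by auto
  qed
  also have "\<dots> = x" using id_in_field_auts_fixing[of K] finite_auts by simp
  finally show ?thesis .
qed

lemma separating_subring_eq_UNIV:
  assumes E_one: "1 \<in> E" and E_add: "\<forall>x\<in>E. \<forall>y\<in>E. x + y \<in> E"
    and E_mult: "\<forall>x\<in>E. \<forall>y\<in>E. x * y \<in> E" and K_E: "K \<subseteq> E"
    and separating: "\<forall>\<sigma>\<in>G. \<forall>\<tau>\<in>G. \<sigma> \<noteq> \<tau> \<longrightarrow> (\<exists>e\<in>E. \<sigma> e \<noteq> \<tau> e)"
  shows "E = UNIV"
proof -
  obtain f where f: "f \<in> evaluation_span E" "\<forall>\<sigma>\<in>G. f \<sigma> = (if \<sigma> = id then 1 else 0)"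
    using evaluation_span_indicator[OF G_mult G_one E_one E_mult separating finite_auts subset_refl
        id_in_field_auts_fixing] by blast
  have "x \<in> E" for x
  proof -
    have "\<forall>l. \<forall>e\<in>E. trace (x * l) * e \<in> E" using trace_in_K K_E E_mult by blast
    then show ?thesis using twisted_sum_in_span[OF _ E_add f(1)] twisted_sum_indicator[OF f(2)] by metis
  qed
  then show ?thesis by auto
qed

lemma exists_trace_one: "\<exists>c. trace c = 1"
proof -
  obtain f where f: "f \<in> evaluation_span UNIV" "\<forall>\<sigma>\<in>G. f \<sigma> = (if \<sigma> = id then 1 else 0)"
    using evaluation_span_indicator[OF G_mult G_one UNIV_I _ _ finite_auts subset_refl id_in_field_auts_fixing]
    by blast
  have "\<exists>l. trace l \<noteq> 0"
  proof (rule ccontr)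
    assume "\<not> (\<exists>l. trace l \<noteq> 0)"
    then have "(\<Sum>\<tau>\<in>G. \<tau> 1 * \<tau> (f (inv_into UNIV \<tau>))) \<in> {0}"
      by (intro twisted_sum_in_span[OF _ _ f(1)]) auto
    then show False using twisted_sum_indicator[OF f(2), of 1] by simp
  qed
  then obtain l where l: "trace l \<noteq> 0" by blast
  have "\<tau> (l / trace l) = \<tau> l / trace l" if "\<tau> \<in> G" for \<tau>
  proof -
    interpret field_hom \<tau> by (rule field_auts_fixing_field_hom[OF that])
    show ?thesis using trace_invariant[OF that] by (simp add: hom_div)
  qed
  then have "trace (l / trace l) = trace l / trace l"
    unfolding trace_def sum_divide_distrib by simp
  then show ?thesis using l by auto
qed

lemma additive_hilbert90:
  assumes cocycle: "\<forall>\<sigma>\<in>G. \<forall>\<tau>\<in>G. f (\<sigma> \<circ> \<tau>) = f \<sigma> + \<sigma> (f \<tau>)"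
  shows "\<exists>\<theta>. \<forall>\<sigma>\<in>G. \<sigma> \<theta> = \<theta> + f \<sigma>"
proof -
  obtain c where c: "trace c = 1" using exists_trace_one by blast
  define b where "b = (\<Sum>\<tau>\<in>G. f \<tau> * \<tau> c)"
  have "\<sigma> (- b) = - b + f \<sigma>" if s: "\<sigma> \<in> G" for \<sigma>
  proof -
    interpret field_hom \<sigma> by (rule field_auts_fixing_field_hom[OF s])
    have "\<sigma> b = (\<Sum>\<tau>\<in>G. f (\<sigma> \<circ> \<tau>) * (\<sigma> \<circ> \<tau>) c - f \<sigma> * (\<sigma> \<circ> \<tau>) c)"
      unfolding b_def hom_sum hom_mult using cocycle s by (intro sum.cong) (auto simp: algebra_simps)
    also have "\<dots> = b - f \<sigma> * trace c"
      using sum_G_reindex[OF s, of "\<lambda>\<mu>. f \<mu> * \<mu> c"] sum_G_reindex[OF s, of "\<lambda>\<mu>. \<mu> c"]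
      by (simp add: sum_subtractf b_def trace_def flip: sum_distrib_left)
    finally show ?thesis using c by (simp add: hom_uminus)
  qed
  then show ?thesis by blast
qed

end

section \<open>Unitriangular matrices\<close>

lemma in_UT_UNIV: "in_UT n UNIV X \<longleftrightarrow> (\<forall>i<n. X i i = 1) \<and> (\<forall>i<n. \<forall>j<i. X i j = 0)"
  unfolding in_UT_def by (auto dest: order.strict_trans)

lemma in_UT_power:
  assumes "in_UT n UNIV X" "m > 0"
  shows "in_UT n UNIV (\<lambda>i j. X i j ^ m)"
  using assms unfolding in_UT_UNIV by simp

lemma unitriangular_prod_lower:
  assumes X: "in_UT n UNIV X" and Y: "in_UT n UNIV Y" and ij: "j \<le> i" "i < n"
  shows "(\<Sum>k<n. X i k * Y k j) = (if i = j then 1 else 0)"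
proof -
  have "X i k * Y k j = (if k = i then (if i = j then 1 else 0) else 0)" if "k < n" for k
    using X Y ij that unfolding in_UT_UNIV by (cases k i rule: linorder_cases) auto
  then have "(\<Sum>k<n. X i k * Y k j) = (\<Sum>k<n. if k = i then (if i = j then 1 else 0) else 0)"
    by (intro sum.cong) auto
  then show ?thesis using ij by simp
qed

lemma unitriangular_prod_cong:
  assumes UT: "in_UT n UNIV X" "in_UT n UNIV Y" "in_UT n UNIV X'" "in_UT n UNIV Y'"
    and ij: "i \<le> j" "j < n"
    and X': "\<And>k. i \<le> k \<Longrightarrow> k \<le> j \<Longrightarrow> X' i k = X i k"
    and Y': "\<And>k. i \<le> k \<Longrightarrow> k \<le> j \<Longrightarrow> Y' k j = Y k j"
  shows "(\<Sum>k<n. X' i k * Y' k j) = (\<Sum>k<n. X i k * Y k j)"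
proof (intro sum.cong refl)
  fix k assume "k \<in> {..<n}"
  then show "X' i k * Y' k j = X i k * Y k j"
    using UT ij X'[of k] Y'[of k] unfolding in_UT_UNIV by (cases "k < i"; cases "j < k") auto
qed

definition mat_upd :: "(nat \<Rightarrow> nat \<Rightarrow> 'b) \<Rightarrow> nat \<Rightarrow> nat \<Rightarrow> 'b \<Rightarrow> nat \<Rightarrow> nat \<Rightarrow> 'b" where
  "mat_upd X i j x a b = (if a = i \<and> b = j then x else X a b)"

lemma mat_upd_self [simp]: "mat_upd X i j (X i j) = X"
  unfolding mat_upd_def by (intro ext) auto

lemma in_UT_mat_upd: "in_UT n UNIV X \<Longrightarrow> i < j \<Longrightarrow> in_UT n UNIV (mat_upd X i j x)"
  unfolding in_UT_UNIV mat_upd_def by auto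

lemma sum_lessThan_change_one:
  fixes f g :: "nat \<Rightarrow> 'b::ab_group_add"
  assumes "m < n" "\<And>k. k < n \<Longrightarrow> k \<noteq> m \<Longrightarrow> f k = g k" "f m = c + g m"
  shows "(\<Sum>k<n. f k) = c + (\<Sum>k<n. g k)"
proof -
  have "(\<Sum>k\<in>{..<n} - {m}. f k) = (\<Sum>k\<in>{..<n} - {m}. g k)" using assms(2) by (intro sum.cong) auto
  then show ?thesis
    using sum.remove[of "{..<n}" m f] sum.remove[of "{..<n}" m g] assms(1,3) by (simp add: add.assoc)
qed

definition mat_of :: "nat \<Rightarrow> (nat \<Rightarrow> nat \<Rightarrow> 'b) \<Rightarrow> 'b mat" where
  "mat_of n X = mat n n (\<lambda>(i, j). X i j)"

lemma mat_of_carrier [simp]: "mat_of n X \<in> carrier_mat n n"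
  and mat_of_dim [simp]: "dim_row (mat_of n X) = n" "dim_col (mat_of n X) = n"
  and mat_of_index [simp]: "i < n \<Longrightarrow> j < n \<Longrightarrow> mat_of n X $$ (i, j) = X i j"
  unfolding mat_of_def by simp_all

lemma mat_of_mult: "mat_of n X * mat_of n Y = mat_of n (\<lambda>i j. \<Sum>k<n. X i k * Y k j)"
  by (rule eq_matI) (auto simp: mat_of_def scalar_prod_def atLeast0LessThan intro: sum.cong)

lemma map_mat_mat_of: "map_mat f (mat_of n X) = mat_of n (\<lambda>i j. f (X i j))"
  by (rule eq_matI) auto

lemma mat_of_eqI: "(\<And>i j. i < n \<Longrightarrow> j < n \<Longrightarrow> X i j = Y i j) \<Longrightarrow> mat_of n X = mat_of n Y"
  by (rule eq_matI) auto

lemma mat_of_in_UT_invertible: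
  fixes X :: "nat \<Rightarrow> nat \<Rightarrow> 'a::field"
  assumes "in_UT n UNIV X"
  shows "\<exists>Y\<in>carrier_mat n n. Y * mat_of n X = 1\<^sub>m n \<and> mat_of n X * Y = 1\<^sub>m n"
proof -
  have "upper_triangular (mat_of n X)" using assms unfolding in_UT_UNIV by (intro upper_triangularI) auto
  moreover have "diag_mat (mat_of n X) = replicate n 1"
    using assms unfolding in_UT_UNIV diag_mat_def by (intro nth_equalityI) auto
  ultimately have "det (mat_of n X) = 1" using det_upper_triangular[OF _ mat_of_carrier[of n X]] by simp
  then have "mat_of n X \<in> Units (ring_mat TYPE('a) n ())" by (intro det_non_zero_imp_unit) auto
  then show ?thesis unfolding Units_def ring_mat_def by auto
qed

text \<open>If \<open>T\<^sup>(\<^sup>p\<^sup>) B = T\<close> and \<open>T'\<^sup>(\<^sup>p\<^sup>) B = T'\<close>, then \<open>(T\<^sup>-\<^sup>1)\<^sup>(\<^sup>p\<^sup>) = B T\<^sup>-\<^sup>1\<close>,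
  so the Frobenius fixes \<open>T' T\<^sup>-\<^sup>1\<close>.\<close>

lemma frobenius_fixes_solution_quotient:
  fixes T T' B Ti :: "'a::field mat"
  assumes p: "prime p" "CHAR('a) = p"
    and carrier: "T \<in> carrier_mat n n" "T' \<in> carrier_mat n n" "B \<in> carrier_mat n n" "Ti \<in> carrier_mat n n"
    and inverse: "Ti * T = 1\<^sub>m n" "T * Ti = 1\<^sub>m n"
    and T: "map_mat (\<lambda>x. x ^ p) T * B = T" and T': "map_mat (\<lambda>x. x ^ p) T' * B = T'"
  shows "map_mat (\<lambda>x. x ^ p) (T' * Ti) = T' * Ti"
proof -
  interpret frob: field_hom "\<lambda>x::'a. x ^ p" by (rule frobenius_field_hom[OF p])
  let ?F = "map_mat (\<lambda>x. x ^ p)"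
  have FT: "?F T \<in> carrier_mat n n" and FTi: "?F Ti \<in> carrier_mat n n" and FT': "?F T' \<in> carrier_mat n n"
    using carrier by simp_all
  have inv: "?F Ti * ?F T = 1\<^sub>m n" using frob.mat_hom_mult[OF carrier(4,1)] inverse(1) frob.mat_hom_one by simp
  have "B = (?F Ti * ?F T) * B" using inv carrier(3) by simp
  also have "\<dots> = ?F Ti * T" using assoc_mult_mat[OF FTi FT carrier(3)] T by simp
  finally have "B * Ti = ?F Ti * (T * Ti)" using assoc_mult_mat[OF FTi carrier(1,4)] by simp
  then have "?F Ti = B * Ti" using inverse(2) FTi by simp
  then have "?F (T' * Ti) = (?F T' * B) * Ti"
    using frob.mat_hom_mult[OF carrier(2,4)] assoc_mult_mat[OF FT' carrier(3,4)] by simp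
  then show ?thesis using T' by simp
qed

lemma invertible_conjugate_eq_imp_one:
  fixes T T' R Ti T'i :: "'a::field mat"
  assumes carrier: "T \<in> carrier_mat n n" "T' \<in> carrier_mat n n" "R \<in> carrier_mat n n"
    and Ti: "Ti \<in> carrier_mat n n" "Ti * T = 1\<^sub>m n" "T * Ti = 1\<^sub>m n"
    and T'i: "T'i \<in> carrier_mat n n" "T'i * T' = 1\<^sub>m n"
    and eq: "(T' * Ti) * (R * T) = T'"
  shows "R = 1\<^sub>m n"
proof -
  have "(T * T'i) * (T' * Ti) = 1\<^sub>m n"
    using assoc_mult_mat[OF carrier(1) T'i(1) mult_carrier_mat[OF carrier(2) Ti(1)]]
      assoc_mult_mat[OF T'i(1) carrier(2) Ti(1)] T'i(2) Ti(1,3) carrier(1) by simp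
  then have "R * T = (T * T'i) * T'"
    using assoc_mult_mat[OF mult_carrier_mat[OF carrier(1) T'i(1)] mult_carrier_mat[OF carrier(2) Ti(1)]
        mult_carrier_mat[OF carrier(3,1)]] eq carrier by simp
  also have "\<dots> = T" using assoc_mult_mat[OF carrier(1) T'i(1) carrier(2)] T'i(2) carrier(1) by simp
  finally show ?thesis using assoc_mult_mat[OF carrier(3,1) Ti(1)] Ti(3) carrier(3) by simp
qed

lemma frobenius_fixed_mat_hom_fixed:
  fixes g :: "'a::field mat"
  assumes p: "prime p" "CHAR('a) = p" and \<sigma>: "field_hom \<sigma>" and g: "map_mat (\<lambda>x. x ^ p) g = g"
  shows "map_mat \<sigma> g = g"
proof (rule eq_matI)
  interpret field_hom \<sigma> by (rule \<sigma>)
  fix i j assume ij: "i < dim_row g" "j < dim_col g"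
  then have "g $$ (i, j) ^ p = g $$ (i, j)" using g by (metis index_map_mat(1))
  then obtain c where "g $$ (i, j) = of_nat c" using frobenius_fixed_imp_of_nat[OF p] by blast
  then show "map_mat \<sigma> g $$ (i, j) = g $$ (i, j)" using ij by (simp add: hom_of_nat)
qed auto

lemma finite_carrier_UT_Fp: "finite (carrier (UT_Fp n p))"
proof -
  let ?F = "(\<lambda>f i j. if i < n \<and> j < n then f (i, j) else 0) ` (({..<n} \<times> {..<n}) \<rightarrow>\<^sub>E {..<p})"
  have "M \<in> ?F" if "M \<in> carrier (UT_Fp n p)" for M
  proof (rule image_eqI)
    show "M = (\<lambda>i j. if i < n \<and> j < n then (restrict (\<lambda>(i, j). M i j) ({..<n} \<times> {..<n})) (i, j) else 0)"
      using that unfolding UT_Fp_def by (auto intro!: ext)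
    show "restrict (\<lambda>(i, j). M i j) ({..<n} \<times> {..<n}) \<in> ({..<n} \<times> {..<n}) \<rightarrow>\<^sub>E {..<p}"
      using that unfolding UT_Fp_def by auto
  qed
  then show ?thesis by (meson finite_PiE finite_SigmaI finite_imageI finite_lessThan finite_subset subsetI)
qed

lemma field_adjoin_subring:
  shows "1 \<in> field_adjoin K S"
    and "\<forall>x\<in>field_adjoin K S. \<forall>y\<in>field_adjoin K S. x + y \<in> field_adjoin K S"
    and "\<forall>x\<in>field_adjoin K S. \<forall>y\<in>field_adjoin K S. x * y \<in> field_adjoin K S"
    and "K \<subseteq> field_adjoin K S" and "S \<subseteq> field_adjoin K S"
  unfolding field_adjoin_def is_subfield_def by auto

section \<open>The Galois action as unitriangular matrices\<close>

locale ut_galois = complete_dvf K k v t p + finite_galois_ext K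
  for K :: "'a::field set" and k v t p +
  fixes n :: nat and \<phi> :: "('a \<Rightarrow> 'a) \<Rightarrow> nat \<Rightarrow> nat \<Rightarrow> nat"
  assumes \<phi>_hom: "\<phi> \<in> hom (Gal K) (UT_Fp n p)"
    and \<phi>_bij: "bij_betw \<phi> (field_auts_fixing K) (carrier (UT_Fp n p))"
begin

text \<open>The inverse makes \<open>\<rho>\<close> an
  anti-homomorphism, which is what \<open>\<sigma>(\<Theta>) = \<rho>(\<sigma>) \<Theta>\<close> requires:
  \<open>(\<sigma> \<circ> \<tau>)(\<Theta>) = \<rho>(\<tau>) \<rho>(\<sigma>) \<Theta>\<close>.\<close>

definition \<rho> :: "('a \<Rightarrow> 'a) \<Rightarrow> nat \<Rightarrow> nat \<Rightarrow> 'a" where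
  "\<rho> \<sigma> i j = of_nat (\<phi> (inv_into UNIV \<sigma>) i j)"

lemma \<phi>_entries:
  assumes "\<sigma> \<in> G"
  shows "\<phi> \<sigma> i j < p" "\<not> (i < n \<and> j < n) \<Longrightarrow> \<phi> \<sigma> i j = 0" "i < n \<Longrightarrow> \<phi> \<sigma> i i = 1"
    "j < i \<Longrightarrow> \<phi> \<sigma> i j = 0"
  using bij_betw_apply[OF \<phi>_bij assms] unfolding UT_Fp_def by auto

lemma \<rho>_in_UT: "\<sigma> \<in> G \<Longrightarrow> in_UT n UNIV (\<rho> \<sigma>)"
  using \<phi>_entries[OF inv_in_field_auts_fixing] unfolding in_UT_UNIV \<rho>_def by simp

lemma \<rho>_power_p: "\<rho> \<sigma> i j ^ p = \<rho> \<sigma> i j"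
  unfolding \<rho>_def by (rule frob.hom_of_nat)

lemma \<rho>_fixed:
  assumes "\<tau> \<in> G" shows "\<tau> (\<rho> \<sigma> i j) = \<rho> \<sigma> i j"
proof -
  interpret field_hom \<tau> by (rule field_auts_fixing_field_hom[OF assms])
  show ?thesis unfolding \<rho>_def by (rule hom_of_nat)
qed

lemma \<rho>_comp:
  assumes \<sigma>: "\<sigma> \<in> G" and \<tau>: "\<tau> \<in> G" and ij: "i < n" "j < n"
  shows "\<rho> (\<sigma> \<circ> \<tau>) i j = (\<Sum>m<n. \<rho> \<tau> i m * \<rho> \<sigma> m j)"
proof -
  have "inv_into UNIV (\<sigma> \<circ> \<tau>) = inv_into UNIV \<tau> \<otimes>\<^bsub>Gal K\<^esub> inv_into UNIV \<sigma>"
    using o_inv_distrib[OF field_auts_fixing_bij[OF \<sigma>] field_auts_fixing_bij[OF \<tau>]] by (simp add: Gal_def)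
  then have "\<phi> (inv_into UNIV (\<sigma> \<circ> \<tau>)) = \<phi> (inv_into UNIV \<tau>) \<otimes>\<^bsub>UT_Fp n p\<^esub> \<phi> (inv_into UNIV \<sigma>)"
    using hom_mult[OF \<phi>_hom] inv_in_field_auts_fixing[OF \<sigma>] inv_in_field_auts_fixing[OF \<tau>]
    by (simp add: Gal_def)
  then show ?thesis using ij of_nat_mod_CHAR[where 'a='a] char_p by (simp add: \<rho>_def UT_Fp_def)
qed

lemma \<phi>_id: "\<phi> id = \<one>\<^bsub>UT_Fp n p\<^esub>"
proof -
  have "\<one>\<^bsub>UT_Fp n p\<^esub> \<in> carrier (UT_Fp n p)" using p_ge_2 by (auto simp: UT_Fp_def)
  then obtain \<tau> where \<tau>: "\<tau> \<in> G" "\<phi> \<tau> = \<one>\<^bsub>UT_Fp n p\<^esub>"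
    using \<phi>_bij by (metis bij_betw_imp_surj_on imageE)
  have "\<one>\<^bsub>UT_Fp n p\<^esub> \<otimes>\<^bsub>UT_Fp n p\<^esub> \<one>\<^bsub>UT_Fp n p\<^esub> = \<one>\<^bsub>UT_Fp n p\<^esub>"
    using p_ge_2 by (auto simp: UT_Fp_def if_distrib[of "\<lambda>x. x * _"] cong: if_cong intro!: ext)
  then have "\<phi> (\<tau> \<circ> \<tau>) = \<phi> \<tau>" using hom_mult[OF \<phi>_hom, of \<tau> \<tau>] \<tau> by (simp add: Gal_def)
  then have "\<tau> \<circ> \<tau> = \<tau>"
    using \<phi>_bij comp_in_field_auts_fixing[OF \<tau>(1) \<tau>(1)] \<tau>(1) unfolding bij_betw_def inj_on_def by blast
  then have "\<tau> = id"
    using field_auts_fixing_bij[OF \<tau>(1)] by (metis bij_is_inj comp_apply eq_id_iff injD)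
  then show ?thesis using \<tau>(2) by simp
qed

lemma \<rho>_eq_one_imp_id:
  assumes \<sigma>: "\<sigma> \<in> G" and one: "\<And>i j. i < n \<Longrightarrow> j < n \<Longrightarrow> \<rho> \<sigma> i j = (if i = j then 1 else 0)"
  shows "\<sigma> = id"
proof -
  have \<sigma>': "inv_into UNIV \<sigma> \<in> G" by (rule inv_in_field_auts_fixing[OF \<sigma>])
  have "\<phi> (inv_into UNIV \<sigma>) i j = \<phi> id i j" for i j
  proof (cases "i < n \<and> j < n")
    case True
    then have "(of_nat (\<phi> (inv_into UNIV \<sigma>) i j) :: 'a) = of_nat (\<phi> id i j)"
      using one[of i j] \<phi>_id by (auto simp: \<rho>_def UT_Fp_def)
    then show ?thesis
      using of_nat_eq_CHAR_imp_eq[OF char_p] \<phi>_entries(1)[OF \<sigma>'] \<phi>_entries(1)[OF id_in_field_auts_fixing] by blast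
  next
    case False
    then show ?thesis using \<phi>_entries(2)[OF \<sigma>'] \<phi>_entries(2)[OF id_in_field_auts_fixing] by simp
  qed
  then have "inv_into UNIV \<sigma> = id"
    using \<phi>_bij \<sigma>' id_in_field_auts_fixing unfolding bij_betw_def inj_on_def by blast
  then show ?thesis using field_auts_fixing_inv_cancel(2)[OF \<sigma>] by simp
qed

definition partial_solution :: "nat \<Rightarrow> (nat \<Rightarrow> nat \<Rightarrow> 'a) \<Rightarrow> (nat \<Rightarrow> nat \<Rightarrow> 'a) \<Rightarrow> bool" where
  "partial_solution d \<Theta> A \<longleftrightarrow> in_UT n UNIV \<Theta> \<and> in_UT n UNIV A \<and>
     (\<forall>i j. i < j \<and> j < n \<and> j - i \<le> d \<longrightarrow> A i j \<in> K \<and> reduced (A i j) \<and>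
        (\<forall>\<sigma>\<in>G. \<sigma> (\<Theta> i j) = (\<Sum>k<n. \<rho> \<sigma> i k * \<Theta> k j)) \<and> (\<Sum>k<n. \<Theta> i k ^ p * A k j) = \<Theta> i j)"

lemma partial_solution_entries:
  assumes ps: "partial_solution d \<Theta> A" and ab: "a < n" "b < n" "b - a \<le> d"
  shows "A a b \<in> K \<and> (\<forall>\<sigma>\<in>G. \<sigma> (\<Theta> a b) = (\<Sum>k<n. \<rho> \<sigma> a k * \<Theta> k b)) \<and>
    (\<Sum>k<n. \<Theta> a k ^ p * A k b) = \<Theta> a b"
proof (cases "a < b")
  case True
  then show ?thesis using ps ab unfolding partial_solution_def by auto
next
  case False
  have UT: "in_UT n UNIV \<Theta>" "in_UT n UNIV A" using ps unfolding partial_solution_def by auto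
  then have "\<Theta> a b = (if a = b then 1 else 0)" "A a b = (if a = b then 1 else 0)"
    using ab False unfolding in_UT_UNIV by auto
  moreover have "\<sigma> (if a = b then 1 else 0) = (if a = b then 1 else 0)" if "\<sigma> \<in> G" for \<sigma>
  proof -
    interpret field_hom \<sigma> by (rule field_auts_fixing_field_hom[OF that])
    show ?thesis by simp
  qed
  moreover have "in_UT n UNIV (\<lambda>i j. \<Theta> i j ^ p)" using in_UT_power[OF UT(1)] p_ge_2 by simp
  moreover have "b \<le> a" using False by simp
  ultimately show ?thesis
    using unitriangular_prod_lower[OF \<rho>_in_UT UT(1), of _ b a] unitriangular_prod_lower[of n _ A b a]
      UT(2) ab(1) K_zero K_one by auto
qed

definition galois_increment :: "(nat \<Rightarrow> nat \<Rightarrow> 'a) \<Rightarrow> nat \<Rightarrow> nat \<Rightarrow> ('a \<Rightarrow> 'a) \<Rightarrow> 'a" where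
  "galois_increment \<Theta> i j \<sigma> = (\<Sum>k<n. \<rho> \<sigma> i k * mat_upd \<Theta> i j 0 k j)"

definition frobenius_remainder :: "(nat \<Rightarrow> nat \<Rightarrow> 'a) \<Rightarrow> (nat \<Rightarrow> nat \<Rightarrow> 'a) \<Rightarrow> nat \<Rightarrow> nat \<Rightarrow> 'a" where
  "frobenius_remainder \<Theta> A i j = (\<Sum>k<n. mat_upd \<Theta> i j 0 i k ^ p * mat_upd A i j 0 k j)"

lemma sum_\<rho>_mat_upd:
  assumes "\<sigma> \<in> G" "i < n"
  shows "(\<Sum>k<n. \<rho> \<sigma> i k * mat_upd \<Theta> i j \<theta> k j) = \<theta> + galois_increment \<Theta> i j \<sigma>"
  unfolding galois_increment_def
  by (rule sum_lessThan_change_one[OF assms(2)])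
    (use \<rho>_in_UT[OF assms(1)] assms(2) in \<open>auto simp: in_UT_UNIV mat_upd_def\<close>)

lemma sum_frobenius_mat_upd:
  assumes UT: "in_UT n UNIV \<Theta>" "in_UT n UNIV A" and ij: "i < j" "j < n"
  shows "(\<Sum>k<n. mat_upd \<Theta> i j \<theta> i k ^ p * mat_upd A i j a k j) = \<theta> ^ p + a + frobenius_remainder \<Theta> A i j"
proof -
  have one: "\<Theta> i i = 1" "A j j = 1" using UT ij unfolding in_UT_UNIV by auto
  have "(\<Sum>k<n. mat_upd \<Theta> i j \<theta> i k ^ p * mat_upd A i j a k j)
      = \<theta> ^ p + (\<Sum>k<n. mat_upd \<Theta> i j 0 i k ^ p * mat_upd A i j a k j)"
    by (rule sum_lessThan_change_one[OF ij(2)]) (use ij one p_ge_2 in \<open>auto simp: mat_upd_def\<close>)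
  also have "(\<Sum>k<n. mat_upd \<Theta> i j 0 i k ^ p * mat_upd A i j a k j) = a + frobenius_remainder \<Theta> A i j"
    unfolding frobenius_remainder_def
    by (rule sum_lessThan_change_one[of i]) (use ij one in \<open>auto simp: mat_upd_def\<close>)
  finally show ?thesis by (simp add: add.assoc)
qed

lemma sums_agreeing_with_mat_upd:
  assumes UT: "in_UT n UNIV \<Theta>" "in_UT n UNIV A" "in_UT n UNIV \<Theta>'" "in_UT n UNIV A'"
    and ab: "a < b" "b < n"
    and agree: "\<And>k. a \<le> k \<Longrightarrow> k \<le> b \<Longrightarrow> mat_upd \<Theta> a b (\<Theta>' a b) k b = \<Theta>' k b \<and>
      mat_upd \<Theta> a b (\<Theta>' a b) a k = \<Theta>' a k \<and> mat_upd A a b (A' a b) k b = A' k b"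
  shows "\<forall>\<sigma>\<in>G. (\<Sum>k<n. \<rho> \<sigma> a k * \<Theta>' k b) = \<Theta>' a b + galois_increment \<Theta> a b \<sigma>"
    and "(\<Sum>k<n. \<Theta>' a k ^ p * A' k b) = \<Theta>' a b ^ p + A' a b + frobenius_remainder \<Theta> A a b"
proof -
  have UT1: "in_UT n UNIV (mat_upd \<Theta> a b (\<Theta>' a b))" "in_UT n UNIV (mat_upd A a b (A' a b))"
    using in_UT_mat_upd[OF _ ab(1)] UT by auto
  show "\<forall>\<sigma>\<in>G. (\<Sum>k<n. \<rho> \<sigma> a k * \<Theta>' k b) = \<Theta>' a b + galois_increment \<Theta> a b \<sigma>"
  proof
    fix \<sigma> assume \<sigma>: "\<sigma> \<in> G"
    have "(\<Sum>k<n. \<rho> \<sigma> a k * \<Theta>' k b) = (\<Sum>k<n. \<rho> \<sigma> a k * mat_upd \<Theta> a b (\<Theta>' a b) k b)"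
      by (rule unitriangular_prod_cong[OF \<rho>_in_UT[OF \<sigma>] UT1(1) \<rho>_in_UT[OF \<sigma>] UT(3)]) (use ab agree in auto)
    then show "(\<Sum>k<n. \<rho> \<sigma> a k * \<Theta>' k b) = \<Theta>' a b + galois_increment \<Theta> a b \<sigma>"
      using sum_\<rho>_mat_upd[OF \<sigma>] ab by simp
  qed
  have "(\<Sum>k<n. \<Theta>' a k ^ p * A' k b) = (\<Sum>k<n. mat_upd \<Theta> a b (\<Theta>' a b) a k ^ p * mat_upd A a b (A' a b) k b)"
    by (rule unitriangular_prod_cong[OF in_UT_power[OF UT1(1)] UT1(2) in_UT_power[OF UT(3)] UT(4)])
      (use ab agree p_ge_2 in auto)
  then show "(\<Sum>k<n. \<Theta>' a k ^ p * A' k b) = \<Theta>' a b ^ p + A' a b + frobenius_remainder \<Theta> A a b"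
    using sum_frobenius_mat_upd[OF UT(1,2) ab] by simp
qed

context
  fixes d \<Theta> A i j
  assumes ps: "partial_solution d \<Theta> A" and ij: "i < j" "j < n" "j - i = Suc d"
begin

lemma closer_entries:
  assumes "i < m" "m < n"
  shows "A m j \<in> K" "\<sigma> \<in> G \<Longrightarrow> \<sigma> (\<Theta> m j) = (\<Sum>k<n. \<rho> \<sigma> m k * \<Theta> k j)"
    "(\<Sum>k<n. \<Theta> m k ^ p * A k j) = \<Theta> m j"
  using partial_solution_entries[OF ps assms(2) ij(2)] assms ij by auto

lemma galois_increment_cocycle:
  assumes \<sigma>: "\<sigma> \<in> G" and \<tau>: "\<tau> \<in> G"
  shows "galois_increment \<Theta> i j (\<sigma> \<circ> \<tau>) = galois_increment \<Theta> i j \<sigma> + \<sigma> (galois_increment \<Theta> i j \<tau>)"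
proof -
  interpret field_hom \<sigma> by (rule field_auts_fixing_field_hom[OF \<sigma>])
  let ?F = "galois_increment \<Theta> i j" and ?\<Theta>0 = "mat_upd \<Theta> i j 0"
  have inner: "\<rho> \<tau> i m * (\<Sum>k<n. \<rho> \<sigma> m k * ?\<Theta>0 k j) = \<rho> \<tau> i m * (if m = i then ?F \<sigma> else \<sigma> (?\<Theta>0 m j))"
    if "m < n" for m
  proof (cases m i rule: linorder_cases)
    case less
    then show ?thesis using \<rho>_in_UT[OF \<tau>] ij unfolding in_UT_UNIV by simp
  next
    case equal
    then show ?thesis by (simp add: galois_increment_def)
  next
    case greater
    have "(\<Sum>k<n. \<rho> \<sigma> m k * ?\<Theta>0 k j) = (\<Sum>k<n. \<rho> \<sigma> m k * \<Theta> k j)"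
      using \<rho>_in_UT[OF \<sigma>] greater that unfolding in_UT_UNIV by (intro sum.cong) (auto simp: mat_upd_def)
    then show ?thesis using closer_entries(2)[OF greater that \<sigma>] greater by (simp add: mat_upd_def)
  qed
  have "?F (\<sigma> \<circ> \<tau>) = (\<Sum>k<n. (\<Sum>m<n. \<rho> \<tau> i m * \<rho> \<sigma> m k) * ?\<Theta>0 k j)"
    unfolding galois_increment_def using \<rho>_comp[OF \<sigma> \<tau>] ij by (intro sum.cong) auto
  also have "\<dots> = (\<Sum>m<n. \<rho> \<tau> i m * (\<Sum>k<n. \<rho> \<sigma> m k * ?\<Theta>0 k j))"
    by (simp add: sum_distrib_left sum_distrib_right mult.assoc) (rule sum.swap)
  also have "\<dots> = (\<Sum>m<n. \<rho> \<tau> i m * (if m = i then ?F \<sigma> else \<sigma> (?\<Theta>0 m j)))"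
    using inner by (intro sum.cong) auto
  also have "\<dots> = ?F \<sigma> + (\<Sum>m<n. \<rho> \<tau> i m * \<sigma> (?\<Theta>0 m j))"
    by (rule sum_lessThan_change_one[of i]) (use \<rho>_in_UT[OF \<tau>] ij in \<open>auto simp: in_UT_UNIV mat_upd_def\<close>)
  also have "(\<Sum>m<n. \<rho> \<tau> i m * \<sigma> (?\<Theta>0 m j)) = \<sigma> (?F \<tau>)"
    unfolding galois_increment_def hom_sum hom_mult \<rho>_fixed[OF \<sigma>] ..
  finally show ?thesis .
qed

lemma galois_action_row_summand:
  assumes \<theta>: "\<forall>\<sigma>\<in>G. \<sigma> \<theta> = \<theta> + galois_increment \<Theta> i j \<sigma>" and \<sigma>: "\<sigma> \<in> G" and q: "q < n"
  shows "\<sigma> (mat_upd \<Theta> i j \<theta> i q ^ p * mat_upd A i j 0 q j)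
    = (\<Sum>m<n. \<rho> \<sigma> i m * mat_upd \<Theta> i j \<theta> m q ^ p) * mat_upd A i j 0 q j"
proof (cases "j < q")
  case True
  then have "mat_upd A i j 0 q j = 0" using ps q ij unfolding partial_solution_def in_UT_UNIV mat_upd_def by simp
  then show ?thesis by (simp add: field_auts_fixing_zero[OF \<sigma>])
next
  case False
  interpret field_hom \<sigma> by (rule field_auts_fixing_field_hom[OF \<sigma>])
  have "\<sigma> (mat_upd \<Theta> i j \<theta> i q) = (\<Sum>m<n. \<rho> \<sigma> i m * mat_upd \<Theta> i j \<theta> m q)"
  proof (cases "q = j")
    case True
    then show ?thesis using \<theta> \<sigma> sum_\<rho>_mat_upd[OF \<sigma>] ij by (simp add: mat_upd_def)
  next
    case False
    then have "q - i \<le> d" using \<open>\<not> j < q\<close> ij by linarith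
    then show ?thesis using partial_solution_entries[OF ps _ q] ij \<sigma> False by (simp add: mat_upd_def)
  qed
  then have frob: "\<sigma> (mat_upd \<Theta> i j \<theta> i q) ^ p = (\<Sum>m<n. \<rho> \<sigma> i m * mat_upd \<Theta> i j \<theta> m q ^ p)"
    by (simp add: frob.hom_sum power_mult_distrib \<rho>_power_p)
  have "\<sigma> (mat_upd A i j 0 q j) = mat_upd A i j 0 q j \<or> mat_upd \<Theta> i j \<theta> i q = 0"
  proof (cases q i rule: linorder_cases)
    case less
    then show ?thesis using ps ij unfolding partial_solution_def in_UT_UNIV by (simp add: mat_upd_def)
  next
    case greater
    then show ?thesis
      using closer_entries(1)[OF greater q] field_auts_fixing_fixes[OF \<sigma>] by (simp add: mat_upd_def)
  qed (simp add: mat_upd_def)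
  then show ?thesis using frob by (auto simp: hom_mult hom_power)
qed

lemma frobenius_rows_below:
  assumes "i < m" "m < n"
  shows "(\<Sum>k<n. mat_upd \<Theta> i j \<theta> m k ^ p * mat_upd A i j 0 k j) = \<Theta> m j"
proof -
  have "(\<Sum>k<n. mat_upd \<Theta> i j \<theta> m k ^ p * mat_upd A i j 0 k j) = (\<Sum>k<n. \<Theta> m k ^ p * A k j)"
    using ps assms p_ge_2 unfolding partial_solution_def in_UT_UNIV by (intro sum.cong) (auto simp: mat_upd_def)
  then show ?thesis using closer_entries(3)[OF assms] by simp
qed

lemma frobenius_remainder_invariant:
  assumes \<theta>: "\<forall>\<sigma>\<in>G. \<sigma> \<theta> = \<theta> + galois_increment \<Theta> i j \<sigma>" and \<sigma>: "\<sigma> \<in> G"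
  shows "\<sigma> (\<theta> - \<theta> ^ p - frobenius_remainder \<Theta> A i j) = \<theta> - \<theta> ^ p - frobenius_remainder \<Theta> A i j"
proof -
  interpret field_hom \<sigma> by (rule field_auts_fixing_field_hom[OF \<sigma>])
  have UT: "in_UT n UNIV \<Theta>" "in_UT n UNIV A" using ps unfolding partial_solution_def by auto
  let ?\<Theta>1 = "mat_upd \<Theta> i j \<theta>" and ?A0 = "mat_upd A i j 0"
  define a0 where "a0 = \<theta> - \<theta> ^ p - frobenius_remainder \<Theta> A i j"
  have row: "(\<Sum>k<n. ?\<Theta>1 i k ^ p * ?A0 k j) = \<theta> - a0"
    using sum_frobenius_mat_upd[OF UT ij(1,2), of \<theta> 0] unfolding a0_def by simp
  have rows: "\<rho> \<sigma> i m * (\<Sum>k<n. ?\<Theta>1 m k ^ p * ?A0 k j)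
      = \<rho> \<sigma> i m * (if m = i then \<theta> - a0 else mat_upd \<Theta> i j 0 m j)" if "m < n" for m
    using row frobenius_rows_below[OF _ that] \<rho>_in_UT[OF \<sigma>] ij that
    by (cases m i rule: linorder_cases) (auto simp: in_UT_UNIV mat_upd_def)
  have "a0 = \<theta> - (\<Sum>k<n. ?\<Theta>1 i k ^ p * ?A0 k j)" using row by simp
  then have "\<sigma> a0 = \<sigma> \<theta> - (\<Sum>k<n. \<sigma> (?\<Theta>1 i k ^ p * ?A0 k j))" by (simp add: hom_minus hom_sum)
  also have "\<dots> = \<sigma> \<theta> - (\<Sum>k<n. (\<Sum>m<n. \<rho> \<sigma> i m * ?\<Theta>1 m k ^ p) * ?A0 k j)"
    using galois_action_row_summand[OF \<theta> \<sigma>] by simp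
  also have "\<dots> = \<sigma> \<theta> - (\<Sum>m<n. \<rho> \<sigma> i m * (\<Sum>k<n. ?\<Theta>1 m k ^ p * ?A0 k j))"
    by (simp add: sum_distrib_left sum_distrib_right mult.assoc) (rule sum.swap)
  also have "\<dots> = \<sigma> \<theta> - (\<Sum>m<n. \<rho> \<sigma> i m * (if m = i then \<theta> - a0 else mat_upd \<Theta> i j 0 m j))"
    using rows by (intro arg_cong2[where f = minus] sum.cong) auto
  also have "(\<Sum>m<n. \<rho> \<sigma> i m * (if m = i then \<theta> - a0 else mat_upd \<Theta> i j 0 m j))
      = (\<theta> - a0) + galois_increment \<Theta> i j \<sigma>"
    unfolding galois_increment_def
    by (rule sum_lessThan_change_one[of i]) (use \<rho>_in_UT[OF \<sigma>] ij in \<open>auto simp: in_UT_UNIV mat_upd_def\<close>)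
  finally have "\<sigma> a0 = \<sigma> \<theta> - (\<theta> - a0 + galois_increment \<Theta> i j \<sigma>)" .
  then show ?thesis using \<theta> \<sigma> unfolding a0_def[symmetric] by (simp add: algebra_simps)
qed

lemma partial_solution_next_entry:
  "\<exists>\<theta>. (\<forall>\<sigma>\<in>G. \<sigma> \<theta> = \<theta> + galois_increment \<Theta> i j \<sigma>) \<and>
     \<theta> - \<theta> ^ p - frobenius_remainder \<Theta> A i j \<in> K \<and> reduced (\<theta> - \<theta> ^ p - frobenius_remainder \<Theta> A i j)"
proof -
  obtain \<theta>0 where \<theta>0: "\<forall>\<sigma>\<in>G. \<sigma> \<theta>0 = \<theta>0 + galois_increment \<Theta> i j \<sigma>"
    using additive_hilbert90 galois_increment_cocycle by blast
  define a0 where "a0 = \<theta>0 - \<theta>0 ^ p - frobenius_remainder \<Theta> A i j"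
  have "a0 \<in> K" using frobenius_remainder_invariant[OF \<theta>0] fixed_field unfolding a0_def by blast
  then obtain b where b: "b \<in> K" "reduced (a0 + b - b ^ p)" using exists_reduced_translate by blast
  show ?thesis
  proof (intro exI[of _ "\<theta>0 + b"] conjI ballI)
    fix \<sigma> assume "\<sigma> \<in> G"
    moreover have "\<sigma> (\<theta>0 + b) = \<sigma> \<theta>0 + \<sigma> b" using \<open>\<sigma> \<in> G\<close> by (simp add: field_auts_fixing_def)
    ultimately show "\<sigma> (\<theta>0 + b) = \<theta>0 + b + galois_increment \<Theta> i j \<sigma>"
      using bspec[OF \<theta>0 \<open>\<sigma> \<in> G\<close>] field_auts_fixing_fixes[OF \<open>\<sigma> \<in> G\<close> b(1)] by simp
  next
    have eq: "(\<theta>0 + b) - (\<theta>0 + b) ^ p - frobenius_remainder \<Theta> A i j = a0 + b - b ^ p"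
      unfolding a0_def by (simp add: frob.hom_add algebra_simps)
    show "(\<theta>0 + b) - (\<theta>0 + b) ^ p - frobenius_remainder \<Theta> A i j \<in> K"
      unfolding eq using b(1) \<open>a0 \<in> K\<close> by (intro K_diff K_add K_power)
    show "reduced ((\<theta>0 + b) - (\<theta>0 + b) ^ p - frobenius_remainder \<Theta> A i j)"
      unfolding eq by (fact b(2))
  qed
qed

end

lemma partial_solution_step:
  assumes ps: "partial_solution d \<Theta> A"
  shows "\<exists>\<Theta>' A'. partial_solution (Suc d) \<Theta>' A'"
proof -
  have UT: "in_UT n UNIV \<Theta>" "in_UT n UNIV A" using ps unfolding partial_solution_def by auto
  define new where "new a b \<longleftrightarrow> a < b \<and> b < n \<and> b - a = Suc d" for a b
  define good where "good a b \<theta> \<longleftrightarrow> (\<forall>\<sigma>\<in>G. \<sigma> \<theta> = \<theta> + galois_increment \<Theta> a b \<sigma>) \<and>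
    \<theta> - \<theta> ^ p - frobenius_remainder \<Theta> A a b \<in> K \<and> reduced (\<theta> - \<theta> ^ p - frobenius_remainder \<Theta> A a b)"
    for a b \<theta>
  define \<Theta>' where "\<Theta>' a b = (if new a b then SOME \<theta>. good a b \<theta> else \<Theta> a b)" for a b
  define A' where "A' a b = (if new a b then \<Theta>' a b - \<Theta>' a b ^ p - frobenius_remainder \<Theta> A a b else A a b)"
    for a b
  have new: "good a b (\<Theta>' a b)" if "new a b" for a b
    using someI_ex[OF partial_solution_next_entry[OF ps]] that unfolding \<Theta>'_def good_def new_def by auto
  have UT': "in_UT n UNIV \<Theta>'" "in_UT n UNIV A'" using UT unfolding in_UT_UNIV \<Theta>'_def A'_def new_def by auto
  have "A' a b \<in> K \<and> reduced (A' a b) \<and> (\<forall>\<sigma>\<in>G. \<sigma> (\<Theta>' a b) = (\<Sum>k<n. \<rho> \<sigma> a k * \<Theta>' k b)) \<and>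
      (\<Sum>k<n. \<Theta>' a k ^ p * A' k b) = \<Theta>' a b"
    if ab: "a < b" "b < n" "b - a \<le> Suc d" for a b
  proof -
    have "mat_upd \<Theta> a b (\<Theta>' a b) k b = \<Theta>' k b \<and> mat_upd \<Theta> a b (\<Theta>' a b) a k = \<Theta>' a k \<and>
        mat_upd A a b (A' a b) k b = A' k b" if "a \<le> k" "k \<le> b" for k
      using that ab unfolding \<Theta>'_def A'_def new_def mat_upd_def by auto
    note sums = sums_agreeing_with_mat_upd[OF UT UT' ab(1,2) this]
    show ?thesis
    proof (cases "new a b")
      case True
      then show ?thesis using new[OF True] sums unfolding good_def A'_def by simp
    next
      case False
      then have "b - a \<le> d" "\<Theta>' a b = \<Theta> a b" "A' a b = A a b" using ab unfolding new_def \<Theta>'_def A'_def by auto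
      then show ?thesis
        using ps sums ab sum_\<rho>_mat_upd[of _ a \<Theta> b "\<Theta> a b"]
          sum_frobenius_mat_upd[OF UT ab(1,2), of "\<Theta> a b" "A a b"] unfolding partial_solution_def
        by auto
    qed
  qed
  then have "partial_solution (Suc d) \<Theta>' A'" using UT' unfolding partial_solution_def by blast
  then show ?thesis by blast
qed

lemma exists_partial_solution: "\<exists>\<Theta> A. partial_solution d \<Theta> A"
proof (induction d)
  case 0
  have "in_UT n UNIV (\<lambda>i j. if i = j then 1 else 0 :: 'a)" by (simp add: in_UT_UNIV)
  then have "partial_solution 0 (\<lambda>i j. if i = j then 1 else 0) (\<lambda>i j. if i = j then 1 else 0)"
    unfolding partial_solution_def by auto
  then show ?case by blast
next
  case (Suc d)
  then show ?case using partial_solution_step by blast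
qed

section \<open>Uniqueness up to \<open>UT\<^sub>n(\<bbbF>\<^sub>p)\<close> and generation\<close>

lemma partial_solution_rigid:
  assumes ps: "partial_solution n \<Theta> A" and \<Theta>': "in_UT n UNIV \<Theta>'" "frob_eq n p \<Theta>' A"
    and \<sigma>: "\<sigma> \<in> G" and fixed: "\<And>i j. i < n \<Longrightarrow> j < n \<Longrightarrow> \<sigma> (\<Theta>' i j) = \<Theta>' i j"
  shows "\<sigma> = id"
proof -
  interpret \<sigma>: field_hom \<sigma> by (rule field_auts_fixing_field_hom[OF \<sigma>])
  have UT: "in_UT n UNIV \<Theta>" using ps unfolding partial_solution_def by simp
  have entries: "\<sigma> (\<Theta> a b) = (\<Sum>k<n. \<rho> \<sigma> a k * \<Theta> k b)" "(\<Sum>k<n. \<Theta> a k ^ p * A k b) = \<Theta> a b"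
    if "a < n" "b < n" for a b
    using partial_solution_entries[OF ps that] \<sigma> that by auto
  define T where "T = mat_of n \<Theta>"
  define T' where "T' = mat_of n \<Theta>'"
  define B where "B = mat_of n A"
  define R where "R = mat_of n (\<rho> \<sigma>)"
  have carrier: "T \<in> carrier_mat n n" "T' \<in> carrier_mat n n" "B \<in> carrier_mat n n" "R \<in> carrier_mat n n"
    unfolding T_def T'_def B_def R_def by simp_all
  obtain Ti where Ti: "Ti \<in> carrier_mat n n" "Ti * T = 1\<^sub>m n" "T * Ti = 1\<^sub>m n"
    using mat_of_in_UT_invertible[OF UT] unfolding T_def by blast
  obtain T'i where T'i: "T'i \<in> carrier_mat n n" "T'i * T' = 1\<^sub>m n"
    using mat_of_in_UT_invertible[OF \<Theta>'(1)] unfolding T'_def by blast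
  have "map_mat (\<lambda>x. x ^ p) T * B = T"
    unfolding T_def B_def map_mat_mat_of mat_of_mult using entries(2) by (intro mat_of_eqI) simp
  moreover have "map_mat (\<lambda>x. x ^ p) T' * B = T'"
    unfolding T'_def B_def map_mat_mat_of mat_of_mult using \<Theta>'(2) unfolding frob_eq_def by (intro mat_of_eqI) simp
  ultimately have g: "map_mat \<sigma> (T' * Ti) = T' * Ti"
    using frobenius_fixed_mat_hom_fixed[OF prime_p char_p \<sigma>.field_hom_axioms]
      frobenius_fixes_solution_quotient[OF prime_p char_p carrier(1-3) Ti] by blast
  have "map_mat \<sigma> T = R * T"
    unfolding T_def R_def map_mat_mat_of mat_of_mult using entries(1) by (intro mat_of_eqI) simp
  moreover have "map_mat \<sigma> T' = T'" unfolding T'_def map_mat_mat_of using fixed by (intro mat_of_eqI) simp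
  moreover have "(T' * Ti) * T = T'" using assoc_mult_mat[OF carrier(2) Ti(1) carrier(1)] Ti(2) carrier(2) by simp
  ultimately have "(T' * Ti) * (R * T) = T'"
    using \<sigma>.mat_hom_mult[of "T' * Ti" n n T n] carrier Ti(1) g by simp
  then have "R = 1\<^sub>m n" by (rule invertible_conjugate_eq_imp_one[OF carrier(1,2,4) Ti T'i])
  then show ?thesis
    using \<rho>_eq_one_imp_id[OF \<sigma>] unfolding R_def by (metis index_one_mat(1) mat_of_index)
qed

lemma partial_solution_generates:
  assumes ps: "partial_solution n \<Theta> A" and \<Theta>': "in_UT n UNIV \<Theta>'" "frob_eq n p \<Theta>' A"
  shows "field_adjoin K {\<Theta>' i j | i j. i < j \<and> j < n} = UNIV"
proof (rule separating_subring_eq_UNIV[OF field_adjoin_subring(1-4)], intro ballI impI)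
  let ?E = "field_adjoin K {\<Theta>' i j | i j. i < j \<and> j < n}"
  fix \<sigma> \<tau> assume \<sigma>: "\<sigma> \<in> G" and \<tau>: "\<tau> \<in> G" and "\<sigma> \<noteq> \<tau>"
  show "\<exists>e\<in>?E. \<sigma> e \<noteq> \<tau> e"
  proof (rule ccontr)
    assume "\<not> (\<exists>e\<in>?E. \<sigma> e \<noteq> \<tau> e)"
    then have agree: "\<sigma> e = \<tau> e" if "e \<in> ?E" for e using that by blast
    define \<mu> where "\<mu> = inv_into UNIV \<tau> \<circ> \<sigma>"
    have \<mu>: "\<mu> \<in> G" unfolding \<mu>_def by (intro comp_in_field_auts_fixing inv_in_field_auts_fixing \<sigma> \<tau>)
    interpret \<mu>: field_hom \<mu> by (rule field_auts_fixing_field_hom[OF \<mu>])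
    have "\<mu> (\<Theta>' i j) = \<Theta>' i j" if "i < n" "j < n" for i j
    proof (cases "i < j")
      case True
      then have "\<Theta>' i j \<in> {\<Theta>' i j | i j. i < j \<and> j < n}" using that by blast
      then have "\<Theta>' i j \<in> ?E" by (rule subsetD[OF field_adjoin_subring(5)])
      then show ?thesis
        using agree inv_into_f_f[OF bij_is_inj[OF field_auts_fixing_bij[OF \<tau>]]] unfolding \<mu>_def by simp
    next
      case False
      then have "\<Theta>' i j = (if i = j then 1 else 0)" using \<Theta>'(1) that unfolding in_UT_UNIV by auto
      then show ?thesis by simp
    qed
    then have "\<mu> = id" by (rule partial_solution_rigid[OF ps \<Theta>' \<mu>])
    moreover have "\<tau> \<circ> \<mu> = \<sigma>" using field_auts_fixing_inv_cancel(2)[OF \<tau>] unfolding \<mu>_def by (simp add: o_assoc)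
    ultimately have "\<sigma> = \<tau>" by simp
    then show False using \<open>\<sigma> \<noteq> \<tau>\<close> by simp
  qed
qed

lemma exists_defining_matrix:
  "\<exists>A. in_UT n K A \<and>
      (\<forall>i j l. i < j \<and> j < n \<and> (int p dvd l \<or> l \<ge> 0) \<longrightarrow> coef v k t (A i j) l = 0) \<and>
      (\<exists>\<Theta>. in_UT n UNIV \<Theta> \<and> frob_eq n p \<Theta> A) \<and>
      (\<forall>\<Theta>. in_UT n UNIV \<Theta> \<and> frob_eq n p \<Theta> A \<longrightarrow> field_adjoin K {\<Theta> i j | i j. i < j \<and> j < n} = UNIV)"
proof -
  obtain \<Theta> A where ps: "partial_solution n \<Theta> A" using exists_partial_solution by blast
  have UT: "in_UT n UNIV \<Theta>" "in_UT n UNIV A" using ps unfolding partial_solution_def by auto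
  have entries: "A a b \<in> K" "(\<Sum>k<n. \<Theta> a k ^ p * A k b) = \<Theta> a b" if "a < n" "b < n" for a b
    using partial_solution_entries[OF ps that] that by auto
  show ?thesis
  proof (rule exI[of _ A], intro conjI allI impI)
    show "in_UT n K A" using UT(2) entries(1) unfolding in_UT_def by blast
    show "coef v k t (A i j) l = 0" if "i < j \<and> j < n \<and> (int p dvd l \<or> l \<ge> 0)" for i j l
      using ps that unfolding partial_solution_def reduced_def by auto
    show "\<exists>\<Theta>. in_UT n UNIV \<Theta> \<and> frob_eq n p \<Theta> A"
      using UT(1) entries(2) unfolding frob_eq_def by blast
    show "field_adjoin K {\<Theta>' i j | i j. i < j \<and> j < n} = UNIV"
      if "in_UT n UNIV \<Theta>' \<and> frob_eq n p \<Theta>' A" for \<Theta>'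
      using partial_solution_generates[OF ps] that by blast
  qed
qed

end

theorem lemma9:
  fixes K k :: "'a::field set" and v :: "'a \<Rightarrow> int" and t :: 'a and p n :: nat
  assumes "prime p" and "CHAR('a) = p"
    and "is_subfield K" and "normalized_discrete_valuation K v" and "v_complete K v"
    and "coefficient_field K v k" and "algebraically_closed_subfield k"
    and "t \<in> K" and "t \<noteq> 0" and "v t = -1"
    and "n \<ge> 2"
    and "finite_galois K" and "Gal K \<cong> UT_Fp n p"
  shows "\<exists>A. in_UT n K A \<and>
      (\<forall>i j l. i < j \<and> j < n \<and> (int p dvd l \<or> l \<ge> 0) \<longrightarrow> coef v k t (A i j) l = 0) \<and>
      (\<exists>\<Theta>. in_UT n UNIV \<Theta> \<and> frob_eq n p \<Theta> A) \<and>
      (\<forall>\<Theta>. in_UT n UNIV \<Theta> \<and> frob_eq n p \<Theta> A \<longrightarrow>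
          field_adjoin K {\<Theta> i j | i j. i < j \<and> j < n} = UNIV)"
proof -
  obtain \<phi> where \<phi>: "\<phi> \<in> iso (Gal K) (UT_Fp n p)" using assms(13) unfolding is_iso_def by blast
  then have bij: "bij_betw \<phi> (field_auts_fixing K) (carrier (UT_Fp n p))"
    unfolding iso_def by (simp add: Gal_def)
  interpret ut_galois K k v t p n \<phi>
  proof unfold_locales
    show "finite (field_auts_fixing K)" using bij_betw_finite[OF bij] finite_carrier_UT_Fp by blast
    show "{x. \<forall>\<sigma>\<in>field_auts_fixing K. \<sigma> x = x} = K" using assms(12) unfolding finite_galois_def by blast
    show "\<phi> \<in> hom (Gal K) (UT_Fp n p)" using \<phi> unfolding iso_def by blast
  qed (use assms bij in auto)
  show ?thesis by (rule exists_defining_matrix)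
qed

end
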